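(* Let $n\ge 3$, $s,t\in\{-1,1\}^{n}$ with $s\neq t$ and $\sharp_{n}(s)=\sharp_{n}(t)$, and let $(\beta_{1},\beta_{2})\in(0,1)^2$ satisfy \[ \sum_{k=1}^{n}\Big(s_{k}\beta_{1}^{\sharp_{k}(s)}\beta_{2}^{\tilde\sharp_{k}(s)}-t_{k}\beta_{1}^{\sharp_{k}(t)}\beta_{2}^{\tilde\sharp_{k}(t)}\Big)=0 .\] Then for all $p\in(0,1)$, \[ \dim_{H}\mu^{p}_{\beta_{1},\beta_{2}}\le \widehat{SD}^{p}_{\beta_{1},\beta_{2}}< SD^{p}_{\beta_{1},\beta_{2}},\] and $\widehat{SD}^{p}_{\beta_{1},\beta_{2}}$ is continuous in $p\in(0,1)$.
   Context: For $\beta_{1},\beta_{2}\in(0,1)$ let $T_{1}(x)=\beta_{1}x+\beta_{1}$, $T_{2}(x)=\beta_{2}x-\beta_{2}$. For $p\in(0,1)$, $\mu^{p}_{\beta_{1},\beta_{2}}$ is the unique Borel probability measure on $\mathbb{R}$ with $\mu^{p}_{\beta_{1},\beta_{2}}=p\,T_{1}(\mu^{p}_{\beta_{1},\beta_{2}})+(1-p)\,T_{2}(\mu^{p}_{\beta_{1},\beta_{2}})$ (push-forwards). $SD^{p}_{\beta_{1},\beta_{2}}=\frac{-p\log p-(1-p)\log(1-p)}{-p\log\beta_{1}-(1-p)\log\beta_{2}}$. For $r\in\{-1,1\}^{n}$ and $1\le k\le n$, $\sharp_{k}(r)$ is the number of entries of $(r_1,\dots,r_k)$ equal to $1$ and $\tilde\sharp_{k}(r)=k-\sharp_{k}(r)$.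 Put $w_r=p^{\sharp_{n}(r)}(1-p)^{\tilde\sharp_{n}(r)}$, $p_{s,t}=w_s+w_t$, $\rho_r=\beta_{1}^{\sharp_{n}(r)}\beta_{2}^{\tilde\sharp_{n}(r)}$ (note $\rho_s=\rho_t$), and \[ \widehat{SD}^{p}_{\beta_{1},\beta_{2}}=\frac{-\sum_{r\in\{-1,1\}^{n}\setminus\{s,t\}}w_r\log w_r-p_{s,t}\log p_{s,t}}{-\sum_{r\in\{-1,1\}^{n}\setminus\{s,t\}}w_r\log \rho_r-p_{s,t}\log\rho_s},\] the similarity dimension of the system of $n$-fold compositions of $T_1,T_2$ in which the two (equal) maps indexed by $s$ and $t$ are merged with combined probability $p_{s,t}$. The Hausdorff dimension of a measure $\mu$ is $\inf\{\dim_H A: A\text{ Borel},\ \mu(A)=1\}$. *)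

theory Defs
  imports "HOL-Probability.Probability"
begin

definition hausdorff_pre :: "real \<Rightarrow> real \<Rightarrow> real set \<Rightarrow> ennreal" where
  "hausdorff_pre d \<delta> A =
     (INF U \<in> {U :: nat \<Rightarrow> real set. A \<subseteq> (\<Union>i. U i) \<and>
                 (\<forall>i. bounded (U i) \<and> diameter (U i) \<le> \<delta>)}.
        (\<Sum>i. ennreal (diameter (U i) powr d)))"

definition hausdorff_outer :: "real \<Rightarrow> real set \<Rightarrow> ennreal" where
  "hausdorff_outer d A = (SUP \<delta> \<in> {0<..}. hausdorff_pre d \<delta> A)"

definition hausdorff_dim :: "real set \<Rightarrow> real" where
  "hausdorff_dim A = Inf {d. 0 < d \<and> hausdorff_outer d A = 0}"

definition hausdorff_dim_measure :: "real measure \<Rightarrow> real" where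
  "hausdorff_dim_measure \<mu> =
     Inf {hausdorff_dim A | A. A \<in> sets borel \<and> measure \<mu> A = 1}"

definition T1 :: "real \<Rightarrow> real \<Rightarrow> real" where "T1 \<beta>1 x = \<beta>1 * x + \<beta>1"
definition T2 :: "real \<Rightarrow> real \<Rightarrow> real" where "T2 \<beta>2 x = \<beta>2 * x - \<beta>2"

definition ssm :: "real \<Rightarrow> real \<Rightarrow> real \<Rightarrow> real measure" where
  "ssm p \<beta>1 \<beta>2 = (THE \<mu>. sets \<mu> = sets borel \<and> prob_space \<mu> \<and>
      (\<forall>A \<in> sets borel. emeasure \<mu> A =
          ennreal p * emeasure (distr \<mu> borel (T1 \<beta>1)) A
        + ennreal (1 - p) * emeasure (distr \<mu> borel (T2 \<beta>2)) A))"

definition SD :: "real \<Rightarrow> real \<Rightarrow> real \<Rightarrow> real" where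
  "SD p \<beta>1 \<beta>2 = (- p * ln p - (1 - p) * ln (1 - p)) / (- p * ln \<beta>1 - (1 - p) * ln \<beta>2)"

text \<open>Sign sequences r in {-1,1}^n are int lists of length n; entry r_k is r ! (k-1).\<close>
definition sign_seqs :: "nat \<Rightarrow> int list set" where
  "sign_seqs n = {r. length r = n \<and> set r \<subseteq> {-1, 1}}"

definition nplus :: "nat \<Rightarrow> int list \<Rightarrow> nat" where
  "nplus k r = length (filter (\<lambda>x. x = 1) (take k r))"

definition nminus :: "nat \<Rightarrow> int list \<Rightarrow> nat" where
  "nminus k r = k - nplus k r"

definition wt :: "nat \<Rightarrow> real \<Rightarrow> int list \<Rightarrow> real" where
  "wt n p r = p ^ nplus n r * (1 - p) ^ nminus n r"

definition rho :: "nat \<Rightarrow> real \<Rightarrow> real \<Rightarrow> int list \<Rightarrow> real" where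
  "rho n \<beta>1 \<beta>2 r = \<beta>1 ^ nplus n r * \<beta>2 ^ nminus n r"

definition SDhat :: "nat \<Rightarrow> int list \<Rightarrow> int list \<Rightarrow> real \<Rightarrow> real \<Rightarrow> real \<Rightarrow> real" where
  "SDhat n s t p \<beta>1 \<beta>2 =
    (- (\<Sum>r \<in> sign_seqs n - {s, t}. wt n p r * ln (wt n p r))
       - (wt n p s + wt n p t) * ln (wt n p s + wt n p t))
  / (- (\<Sum>r \<in> sign_seqs n - {s, t}. wt n p r * ln (rho n \<beta>1 \<beta>2 r))
       - (wt n p s + wt n p t) * ln (rho n \<beta>1 \<beta>2 s))"

end

theory Submission
  imports Defs
begin

text \<open>
  The n-fold iterate of \<open>{T1, T2}\<close> consists of the maps \<open>x \<mapsto> \<rho>\<^sub>r x + o\<^sub>r\<close>, \<open>r \<in> {-1,1}\<^sup>n\<close>,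
  with weights \<open>w\<^sub>r\<close>, and \<open>\<mu>\<close> is self-similar for this system as well. As \<open>#s = #t\<close>, and
  \<open>o\<^sub>s = o\<^sub>t\<close> by hypothesis, the maps indexed by \<open>s\<close> and \<open>t\<close> coincide, so \<open>\<mu>\<close> is also the
  self-similar measure of the system in which they are merged into one map of weight
  \<open>w\<^sub>s + w\<^sub>t\<close>; its entropy over Lyapunov exponent is \<open>SDhat\<close>.

  For a self-similar measure of any finite system of affine contractions, the Hausdorff
  dimension is at most entropy over Lyapunov exponent: for \<open>d\<close> above this ratio a Chernoff
  bound shows that almost every point lies in cylinders of arbitrarily high level \<open>K\<close> whose
  diameter to the power \<open>d\<close> is at most \<open>exp (-\<eta> K)\<close> times their mass, and these cylinders
  form covers of arbitrarily small \<open>d\<close>-dimensional size.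

  Merging two weights strictly lowers the entropy and keeps the Lyapunov exponent
  \<open>n (-p ln \<beta>1 - (1 - p) ln \<beta>2)\<close>, hence \<open>SDhat < SD\<close>; this exponent is positive, which gives
  continuity. Since \<open>ssm\<close> is a definite description, we also show that the fixed point exists
  (the image of the Bernoulli measure under the coding map) and is unique (by comparing
  characteristic functions).
\<close>

definition words :: "'a set \<Rightarrow> nat \<Rightarrow> 'a list set" where
  "words I K = {w. set w \<subseteq> I \<and> length w = K}"

lemma words_0 [simp]: "words I 0 = {[]}"
  by (auto simp: words_def)

lemma words_Suc: "words I (Suc K) = (\<lambda>(i, w). i # w) ` (I \<times> words I K)"
  by (auto simp: words_def length_Suc_conv image_iff)

lemma finite_words: "finite I \<Longrightarrow> finite (words I K)"
  unfolding words_def by (rule finite_lists_length_eq)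

lemma sum_words_Suc:
  "(\<Sum>w\<in>words I (Suc K). f w) = (\<Sum>i\<in>I. \<Sum>w\<in>words I K. f (i # w))"
proof -
  have "inj_on (\<lambda>(i, w). i # w) (I \<times> words I K)"
    by (auto simp: inj_on_def)
  then show ?thesis
    unfolding words_Suc by (simp add: sum.reindex sum.cartesian_product case_prod_unfold)
qed

lemma sum_prod_list_words:
  fixes g :: "'a \<Rightarrow> 'b::comm_semiring_1"
  shows "(\<Sum>w\<in>words I K. prod_list (map g w)) = (\<Sum>i\<in>I. g i) ^ K"
proof (induction K)
  case (Suc K)
  have "(\<Sum>w\<in>words I (Suc K). prod_list (map g w))
      = (\<Sum>i\<in>I. g i * (\<Sum>w\<in>words I K. prod_list (map g w)))"
    by (simp add: sum_words_Suc sum_distrib_left)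
  then show ?case
    by (simp add: Suc sum_distrib_right[symmetric] mult.commute)
qed simp

lemma sum_prod_list_sum_list_words:
  fixes q g :: "'a \<Rightarrow> real"
  assumes "(\<Sum>i\<in>I. q i) = 1"
  shows "(\<Sum>w\<in>words I K. prod_list (map q w) * sum_list (map g w)) = K * (\<Sum>i\<in>I. q i * g i)"
proof (induction K)
  case (Suc K)
  have "(\<Sum>w\<in>words I (Suc K). prod_list (map q w) * sum_list (map g w))
      = (\<Sum>i\<in>I. q i * g i * (\<Sum>w\<in>words I K. prod_list (map q w))
               + q i * (\<Sum>w\<in>words I K. prod_list (map q w) * sum_list (map g w)))"
    by (simp add: sum_words_Suc algebra_simps sum.distrib sum_distrib_left)
  also have "\<dots> = Suc K * (\<Sum>i\<in>I. q i * g i)"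
    using assms by (simp add: Suc sum_prod_list_words sum.distrib flip: sum_distrib_right)
      (simp add: algebra_simps)
  finally show ?case .
qed simp

lemma prod_list_pos: "(\<And>x. x \<in> set xs \<Longrightarrow> 0 < f x) \<Longrightarrow> 0 < prod_list (map f xs :: real list)"
  by (induction xs) auto

lemma ln_prod_list:
  fixes f :: "'a \<Rightarrow> real"
  shows "(\<And>x. x \<in> set xs \<Longrightarrow> 0 < f x) \<Longrightarrow> ln (prod_list (map f xs)) = (\<Sum>x\<leftarrow>xs. ln (f x))"
proof (induction xs)
  case (Cons x xs)
  then have "0 < f x" "0 < prod_list (map f xs)"
    by (auto intro: prod_list_pos)
  moreover have "ln (prod_list (map f xs)) = (\<Sum>x\<leftarrow>xs. ln (f x))"
    using Cons by simp
  ultimately show ?case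
    by (simp add: ln_mult)
qed simp

lemma prod_list_less_1:
  fixes c :: "'a \<Rightarrow> real"
  assumes "w \<noteq> []" and "\<And>i. i \<in> set w \<Longrightarrow> 0 < c i \<and> c i < 1"
  shows "prod_list (map c w) < 1"
  using assms
proof (induction w)
  case (Cons i w)
  show ?case
  proof (cases "w = []")
    case False
    then have "prod_list (map c w) < 1"
      using Cons by simp
    moreover have "0 < c i" "c i < 1"
      using Cons.prems(2)[of i] by auto
    ultimately have "c i * prod_list (map c w) < c i * 1"
      by (intro mult_strict_left_mono)
    with \<open>c i < 1\<close> show ?thesis
      by simp
  qed (use Cons.prems in simp)
qed simp

lemma chernoff_bound_words:
  fixes q L :: "'a \<Rightarrow> real"
  assumes "finite I" and q_nonneg: "\<And>i. i \<in> I \<Longrightarrow> 0 \<le> q i" and "0 \<le> \<theta>"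
  shows "(\<Sum>w\<in>{w \<in> words I K. 0 < sum_list (map L w)}. prod_list (map q w))
           \<le> (\<Sum>i\<in>I. q i * exp (\<theta> * L i)) ^ K"
proof -
  have q_word_nonneg: "0 \<le> prod_list (map q w)" if "w \<in> words I K" for w
    using that q_nonneg by (intro prod_list_nonneg) (auto simp: words_def)
  have tilt: "prod_list (map (\<lambda>i. q i * exp (\<theta> * L i)) w)
      = prod_list (map q w) * exp (\<theta> * sum_list (map L w))" for w
    by (induction w) (simp_all add: distrib_left exp_add)
  have "(\<Sum>w\<in>{w \<in> words I K. 0 < sum_list (map L w)}. prod_list (map q w))
      \<le> (\<Sum>w\<in>{w \<in> words I K. 0 < sum_list (map L w)}. prod_list (map q w) * exp (\<theta> * sum_list (map L w)))"
  proof (intro sum_mono)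
    fix w assume "w \<in> {w \<in> words I K. 0 < sum_list (map L w)}"
    then show "prod_list (map q w) \<le> prod_list (map q w) * exp (\<theta> * sum_list (map L w))"
      using q_word_nonneg[of w] \<open>0 \<le> \<theta>\<close> mult_left_mono[of 1 "exp (\<theta> * sum_list (map L w))"]
      by auto
  qed
  also have "\<dots> \<le> (\<Sum>w\<in>words I K. prod_list (map q w) * exp (\<theta> * sum_list (map L w)))"
    using q_word_nonneg by (intro sum_mono2 finite_words \<open>finite I\<close>) auto
  also have "\<dots> = (\<Sum>i\<in>I. q i * exp (\<theta> * L i)) ^ K"
    by (simp flip: tilt add: sum_prod_list_words)
  finally show ?thesis .
qed

lemma exists_exp_moment_less_1:
  fixes q L :: "'a \<Rightarrow> real"
  assumes "finite I" and "(\<Sum>i\<in>I. q i) = 1" and "(\<Sum>i\<in>I. q i * L i) < 0"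
  shows "\<exists>\<theta>>0. (\<Sum>i\<in>I. q i * exp (\<theta> * L i)) < 1"
proof -
  define f where "f \<theta> = (\<Sum>i\<in>I. q i * exp (\<theta> * L i))" for \<theta>
  have "(f has_real_derivative (\<Sum>i\<in>I. q i * L i)) (at 0)"
    unfolding f_def by (auto intro!: derivative_eq_intros simp: mult.commute)
  from DERIV_neg_dec_right[OF this assms(3)] obtain \<delta> where
    "0 < \<delta>" and dec: "\<And>h. 0 < h \<Longrightarrow> h < \<delta> \<Longrightarrow> f (0 + h) < f 0"
    by blast
  moreover have "f 0 = 1"
    using assms(2) by (simp add: f_def)
  ultimately have "f (\<delta> / 2) < 1"
    using dec[of "\<delta> / 2"] by simp
  then show ?thesis
    using \<open>0 < \<delta>\<close> unfolding f_def by (intro exI[of _ "\<delta> / 2"]) simp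
qed

fun affine_comp :: "('a \<Rightarrow> real) \<Rightarrow> ('a \<Rightarrow> real) \<Rightarrow> 'a list \<Rightarrow> real \<Rightarrow> real" where
  "affine_comp c b [] x = x"
| "affine_comp c b (i # w) x = c i * affine_comp c b w x + b i"

lemma affine_comp_linear: "affine_comp c b w x = prod_list (map c w) * x + affine_comp c b w 0"
  by (induction w) (simp_all add: algebra_simps)

lemma affine_comp_0_eq_sum:
  "affine_comp c b w 0 = (\<Sum>k<length w. prod_list (map c (take k w)) * b (w ! k))"
proof (induction w)
  case (Cons i w)
  then show ?case
    by (simp only: length_Cons sum.lessThan_Suc_shift) (simp add: sum_distrib_left mult.assoc)
qed simp

lemma affine_comp_dist:
  assumes "\<And>i. i \<in> set w \<Longrightarrow> 0 \<le> c i"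
  shows "\<bar>affine_comp c b w x - affine_comp c b w y\<bar> = prod_list (map c w) * \<bar>x - y\<bar>"
  using assms
proof (induction w)
  case (Cons i w)
  have "\<bar>affine_comp c b (i # w) x - affine_comp c b (i # w) y\<bar>
      = \<bar>c i\<bar> * \<bar>affine_comp c b w x - affine_comp c b w y\<bar>"
    by (simp add: abs_mult flip: right_diff_distrib)
  with Cons show ?case
    by simp
qed simp

lemma continuous_on_affine_comp: "continuous_on S (affine_comp c b w)"
  by (induction w) (auto intro!: continuous_intros)

lemma compact_affine_comp_image: "compact S \<Longrightarrow> compact (affine_comp c b w ` S)"
  by (rule compact_continuous_image[OF continuous_on_affine_comp])

lemma diameter_affine_comp_image_le:
  assumes "\<And>i. i \<in> set w \<Longrightarrow> 0 \<le> c i" and "0 \<le> R"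
  shows "diameter (affine_comp c b w ` {-R..R}) \<le> prod_list (map c w) * (2 * R)"
proof (rule diameter_le)
  have c_word_nonneg: "0 \<le> prod_list (map c w)"
    using assms(1) by (intro prod_list_nonneg) auto
  then show "affine_comp c b w ` {-R..R} \<noteq> {} \<or> 0 \<le> prod_list (map c w) * (2 * R)"
    using assms(2) by simp
  fix x y
  assume "x \<in> affine_comp c b w ` {-R..R}" "y \<in> affine_comp c b w ` {-R..R}"
  then obtain x' y' where "x = affine_comp c b w x'" "y = affine_comp c b w y'"
    and "x' \<in> {-R..R}" "y' \<in> {-R..R}"
    by auto
  moreover have "\<bar>x' - y'\<bar> \<le> 2 * R"
    using \<open>x' \<in> {-R..R}\<close> \<open>y' \<in> {-R..R}\<close> by auto
  ultimately show "norm (x - y) \<le> prod_list (map c w) * (2 * R)"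
    using affine_comp_dist[of w c b x' y'] assms(1) c_word_nonneg by (auto intro: mult_left_mono)
qed

section \<open>Covers and Hausdorff dimension\<close>

lemma sum_prod_decode_le:
  fixes h :: "nat \<times> nat \<Rightarrow> real"
  assumes "\<And>p. 0 \<le> h p"
  shows "(\<Sum>n<M. h (prod_decode n)) \<le> (\<Sum>K<M. \<Sum>i<M. h (K, i))"
proof -
  have "prod_decode ` {..<M} \<subseteq> {..<M} \<times> {..<M}"
  proof
    fix p
    assume "p \<in> prod_decode ` {..<M}"
    then obtain n where "n < M" and p: "p = prod_decode n"
      by auto
    obtain K i where Ki: "prod_decode n = (K, i)"
      by force
    then have "prod_encode (K, i) < M"
      using \<open>n < M\<close> by (metis prod_decode_inverse)
    then show "p \<in> {..<M} \<times> {..<M}"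
      using le_prod_encode_1[of K i] le_prod_encode_2[of i K] p Ki by simp
  qed
  then have "(\<Sum>p\<in>prod_decode ` {..<M}. h p) \<le> (\<Sum>p\<in>{..<M} \<times> {..<M}. h p)"
    using assms by (intro sum_mono2) auto
  then show ?thesis
    by (simp add: sum.reindex[OF inj_prod_decode] sum.cartesian_product)
qed

lemma enumerate_finite_levels:
  fixes G :: "nat \<Rightarrow> 'b set" and V :: "'b \<Rightarrow> 'c set" and g :: "'c set \<Rightarrow> real"
  assumes fin: "\<And>K. finite (G K)" and g_nonneg: "\<And>A. 0 \<le> g A" and "g {} = 0"
  obtains U :: "nat \<Rightarrow> 'c set"
  where "\<And>n. U n = {} \<or> (\<exists>K. \<exists>x\<in>G K. U n = V x)"
    and "(\<Union>K. \<Union>x\<in>G K. V x) \<subseteq> (\<Union>n. U n)"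
    and "\<And>M. (\<Sum>n<M. g (U n)) \<le> (\<Sum>K<M. \<Sum>x\<in>G K. g (V x))"
proof -
  define enum where "enum K = (SOME f. bij_betw f {..<card (G K)} (G K))" for K
  have "\<exists>f. bij_betw f {..<card (G K)} (G K)" for K
    using fin ex_bij_betw_nat_finite[of "G K"] by (simp add: atLeast0LessThan)
  then have enum: "bij_betw (enum K) {..<card (G K)} (G K)" for K
    unfolding enum_def by (rule someI_ex)
  define h where "h = (\<lambda>(K, i). if i < card (G K) then g (V (enum K i)) else 0)"
  define U where "U n = (case prod_decode n of (K, i) \<Rightarrow> if i < card (G K) then V (enum K i) else {})" for n
  have h_nonneg: "0 \<le> h p" for p
    by (simp add: h_def g_nonneg split: prod.split)
  have g_U: "g (U n) = h (prod_decode n)" for n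
    by (simp add: U_def h_def \<open>g {} = 0\<close> split: prod.split)
  show ?thesis
  proof
    show "U n = {} \<or> (\<exists>K. \<exists>x\<in>G K. U n = V x)" for n
    proof (cases "prod_decode n")
      case (Pair K i)
      then show ?thesis
        using bij_betw_apply[OF enum[of K], of i] by (auto simp: U_def)
    qed
    show "(\<Union>K. \<Union>x\<in>G K. V x) \<subseteq> (\<Union>n. U n)"
    proof clarify
      fix y K x
      assume "x \<in> G K" "y \<in> V x"
      then obtain i where "i < card (G K)" "enum K i = x"
        using bij_betw_imp_surj_on[OF enum[of K]] by (metis imageE lessThan_iff)
      then have "y \<in> U (prod_encode (K, i))"
        using \<open>y \<in> V x\<close> by (simp add: U_def)
      then show "y \<in> (\<Union>n. U n)"
        by blast
    qed
    fix M
    have "(\<Sum>n<M. g (U n)) \<le> (\<Sum>K<M. \<Sum>i<M. h (K, i))"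
      unfolding g_U using h_nonneg by (rule sum_prod_decode_le)
    also have "\<dots> \<le> (\<Sum>K<M. \<Sum>i<card (G K). h (K, i))"
    proof (intro sum_mono)
      fix K
      have "(\<Sum>i<M. h (K, i)) = (\<Sum>i\<in>{..<M} \<inter> {..<card (G K)}. h (K, i))"
        by (intro sum.mono_neutral_right) (auto simp: h_def)
      also have "\<dots> \<le> (\<Sum>i<card (G K). h (K, i))"
        by (intro sum_mono2) (auto simp: h_nonneg)
      finally show "(\<Sum>i<M. h (K, i)) \<le> (\<Sum>i<card (G K). h (K, i))" .
    qed
    also have "\<dots> = (\<Sum>K<M. \<Sum>x\<in>G K. g (V x))"
      using sum.reindex_bij_betw[OF enum, of "\<lambda>x. g (V x)"] by (simp add: h_def)
    finally show "(\<Sum>n<M. g (U n)) \<le> (\<Sum>K<M. \<Sum>x\<in>G K. g (V x))" .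
  qed
qed

lemma hausdorff_outer_eq_0I:
  fixes E :: "real set"
  assumes "0 < d"
    and covers: "\<And>\<epsilon>. 0 < \<epsilon> \<Longrightarrow> \<exists>(G :: nat \<Rightarrow> 'b set) (V :: 'b \<Rightarrow> real set).
        E \<subseteq> (\<Union>K. \<Union>x\<in>G K. V x) \<and> (\<forall>K. finite (G K)) \<and> (\<forall>K. \<forall>x\<in>G K. bounded (V x)) \<and>
        (\<forall>M. (\<Sum>K<M. \<Sum>x\<in>G K. diameter (V x) powr d) \<le> \<epsilon>)"
  shows "hausdorff_outer d E = 0"
proof -
  let ?g = "\<lambda>A :: real set. diameter A powr d"
  have pre_small: "hausdorff_pre d \<delta> E \<le> ennreal e" if "0 < \<delta>" "0 < e" for \<delta> e
  proof -
    txt \<open>Bounding the total size by \<open>\<delta>\<^sup>d\<close> also bounds every single diameter by \<open>\<delta>\<close>.\<close>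
    define \<epsilon> where "\<epsilon> = min e (\<delta> powr d)"
    have "0 < \<epsilon>"
      using that by (simp add: \<epsilon>_def)
    obtain G :: "nat \<Rightarrow> 'b set" and V where cover: "E \<subseteq> (\<Union>K. \<Union>x\<in>G K. V x)"
      and fin: "\<forall>K. finite (G K)" and bdd: "\<forall>K. \<forall>x\<in>G K. bounded (V x)"
      and small: "\<forall>M. (\<Sum>K<M. \<Sum>x\<in>G K. ?g (V x)) \<le> \<epsilon>"
      using covers[OF \<open>0 < \<epsilon>\<close>] by (elim exE conjE) (rule that; assumption)
    obtain U where U: "\<And>n. U n = {} \<or> (\<exists>K. \<exists>x\<in>G K. U n = V x)"
      and U_cover: "(\<Union>K. \<Union>x\<in>G K. V x) \<subseteq> (\<Union>n. U n)"
      and U_sum: "\<And>M. (\<Sum>n<M. ?g (U n)) \<le> (\<Sum>K<M. \<Sum>x\<in>G K. ?g (V x))"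
      by (rule enumerate_finite_levels[of G ?g V]) (use fin in auto)
    have diameter_le: "diameter (V x) \<le> \<delta>" if "x \<in> G K" for K x
    proof (rule ccontr)
      assume "\<not> ?thesis"
      then have "\<delta> powr d < ?g (V x)"
        using \<open>0 < \<delta>\<close> \<open>0 < d\<close> by (intro powr_less_mono2) auto
      also have "\<dots> \<le> (\<Sum>x\<in>G K. ?g (V x))"
        using that fin by (intro member_le_sum) auto
      also have "\<dots> \<le> (\<Sum>K'<Suc K. \<Sum>x\<in>G K'. ?g (V x))"
        by (rule member_le_sum[of K "{..<Suc K}" "\<lambda>K'. \<Sum>x\<in>G K'. ?g (V x)"]) (auto intro: sum_nonneg)
      also have "\<dots> \<le> \<epsilon>"
        using small by blast
      also have "\<dots> \<le> \<delta> powr d"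
        by (simp add: \<epsilon>_def)
      finally show False
        by simp
    qed
    have "bounded (U n) \<and> diameter (U n) \<le> \<delta>" for n
      using U[of n] bdd diameter_le \<open>0 < \<delta>\<close> by auto
    then have "hausdorff_pre d \<delta> E \<le> (\<Sum>n. ennreal (?g (U n)))"
      unfolding hausdorff_pre_def using cover U_cover by (intro INF_lower) auto
    also have "\<dots> \<le> ennreal e"
    proof (rule suminf_le_const[OF summableI])
      fix M
      have "(\<Sum>n<M. ?g (U n)) \<le> \<epsilon>"
        using U_sum[of M] small by (meson order_trans)
      then have "(\<Sum>n<M. ?g (U n)) \<le> e"
        by (simp add: \<epsilon>_def)
      then show "(\<Sum>n<M. ennreal (?g (U n))) \<le> ennreal e"
        by (simp add: sum_ennreal ennreal_leI)
    qed
    finally show ?thesis .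
  qed
  have "hausdorff_pre d \<delta> E = 0" if "0 < \<delta>" for \<delta>
  proof (rule antisym)
    show "hausdorff_pre d \<delta> E \<le> 0"
      by (rule ennreal_le_epsilon) (simp add: pre_small that)
  qed simp
  then show ?thesis
    by (simp add: hausdorff_outer_def)
qed

lemma hausdorff_dim_measure_le:
  assumes "E \<in> sets borel" "measure \<mu> E = 1" "0 < d" "hausdorff_outer d E = 0"
  shows "hausdorff_dim_measure \<mu> \<le> d"
proof -
  have "hausdorff_dim E \<le> d"
    unfolding hausdorff_dim_def using assms by (intro cInf_lower) (auto intro: bdd_belowI[of _ 0])
  moreover have "hausdorff_dim_measure \<mu> \<le> hausdorff_dim E"
    unfolding hausdorff_dim_measure_def
  proof (rule cInf_lower)
    show "bdd_below {hausdorff_dim A |A. A \<in> sets borel \<and> measure \<mu> A = 1}"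
    proof (rule bdd_belowI[of _ "min 0 (Inf {})"])
      fix x assume "x \<in> {hausdorff_dim A |A. A \<in> sets borel \<and> measure \<mu> A = 1}"
      then obtain A where x: "x = hausdorff_dim A"
        by auto
      show "min 0 (Inf {}) \<le> x"
      proof (cases "{d. 0 < d \<and> hausdorff_outer d A = 0} = {}")
        case True
        then show ?thesis
          unfolding x hausdorff_dim_def True by simp
      next
        case False
        then have "0 \<le> Inf {d. 0 < d \<and> hausdorff_outer d A = 0}"
          by (intro cInf_greatest) auto
        then show ?thesis
          by (simp add: x hausdorff_dim_def)
      qed
    qed
  qed (use assms in auto)
  ultimately show ?thesis
    by simp
qed

definition ifs_entropy :: "'a set \<Rightarrow> ('a \<Rightarrow> real) \<Rightarrow> real" where
  "ifs_entropy I q = - (\<Sum>i\<in>I. q i * ln (q i))"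

definition ifs_lyapunov :: "'a set \<Rightarrow> ('a \<Rightarrow> real) \<Rightarrow> ('a \<Rightarrow> real) \<Rightarrow> real" where
  "ifs_lyapunov I q c = - (\<Sum>i\<in>I. q i * ln (c i))"

lemma ifs_entropy_words:
  assumes "(\<Sum>i\<in>I. q i) = 1" and "\<And>i. i \<in> I \<Longrightarrow> 0 < q i"
  shows "ifs_entropy (words I K) (\<lambda>w. prod_list (map q w)) = K * ifs_entropy I q"
proof -
  have "ifs_entropy (words I K) (\<lambda>w. prod_list (map q w))
      = - (\<Sum>w\<in>words I K. prod_list (map q w) * (\<Sum>i\<leftarrow>w. ln (q i)))"
    unfolding ifs_entropy_def
  proof (intro arg_cong[where f = uminus] sum.cong refl)
    fix w assume "w \<in> words I K"
    then have "ln (prod_list (map q w)) = (\<Sum>i\<leftarrow>w. ln (q i))"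
      using assms(2) by (intro ln_prod_list) (auto simp: words_def)
    then show "prod_list (map q w) * ln (prod_list (map q w)) = prod_list (map q w) * (\<Sum>i\<leftarrow>w. ln (q i))"
      by simp
  qed
  then show ?thesis
    by (simp add: sum_prod_list_sum_list_words[OF assms(1)] ifs_entropy_def)
qed

lemma ifs_lyapunov_words:
  assumes "(\<Sum>i\<in>I. q i) = 1" and "\<And>i. i \<in> I \<Longrightarrow> 0 < c i"
  shows "ifs_lyapunov (words I K) (\<lambda>w. prod_list (map q w)) (\<lambda>w. prod_list (map c w)) = K * ifs_lyapunov I q c"
proof -
  have "ifs_lyapunov (words I K) (\<lambda>w. prod_list (map q w)) (\<lambda>w. prod_list (map c w))
      = - (\<Sum>w\<in>words I K. prod_list (map q w) * (\<Sum>i\<leftarrow>w. ln (c i)))"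
    unfolding ifs_lyapunov_def
  proof (intro arg_cong[where f = uminus] sum.cong refl)
    fix w assume "w \<in> words I K"
    then have "ln (prod_list (map c w)) = (\<Sum>i\<leftarrow>w. ln (c i))"
      using assms(2) by (intro ln_prod_list) (auto simp: words_def)
    then show "prod_list (map q w) * ln (prod_list (map c w)) = prod_list (map q w) * (\<Sum>i\<leftarrow>w. ln (c i))"
      by simp
  qed
  then show ?thesis
    by (simp add: sum_prod_list_sum_list_words[OF assms(1)] ifs_lyapunov_def)
qed

lemma ifs_lyapunov_pos:
  assumes "finite I" "(\<Sum>i\<in>I. q i) = 1" "\<And>i. i \<in> I \<Longrightarrow> 0 < q i"
    and "\<And>i. i \<in> I \<Longrightarrow> 0 < c i" "\<And>i. i \<in> I \<Longrightarrow> c i < 1"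
  shows "0 < ifs_lyapunov I q c"
proof -
  have "I \<noteq> {}"
    using assms(2) by auto
  have "0 < - (q i * ln (c i))" if "i \<in> I" for i
    using assms(3-5)[OF that] by (simp add: mult_pos_neg ln_less_zero)
  then show ?thesis
    unfolding ifs_lyapunov_def sum_negf[symmetric] using assms(1) \<open>I \<noteq> {}\<close> by (rule sum_pos[rotated 2])
qed

lemma ifs_entropy_nonneg:
  assumes "finite I" "(\<Sum>i\<in>I. q i) = 1" "\<And>i. i \<in> I \<Longrightarrow> 0 < q i"
  shows "0 \<le> ifs_entropy I q"
proof -
  have "- (q i * ln (q i)) \<ge> 0" if "i \<in> I" for i
  proof -
    have "q i \<le> 1"
      using member_le_sum[OF that, of q] assms by (simp add: less_imp_le)
    then show ?thesis
      using assms(3)[OF that] by (simp add: mult_nonneg_nonpos)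
  qed
  then show ?thesis
    unfolding ifs_entropy_def sum_negf[symmetric] by (rule sum_nonneg)
qed

lemma sum_merge_weights:
  fixes q g :: "'a \<Rightarrow> real"
  assumes "finite I" "s \<in> I" "t \<in> I" "s \<noteq> t" "g s = g t"
  shows "(\<Sum>i\<in>I - {t}. (q(s := q s + q t)) i * g i) = (\<Sum>i\<in>I. q i * g i)"
proof -
  have "(\<Sum>i\<in>I - {t}. (q(s := q s + q t)) i * g i)
      = (q s + q t) * g s + (\<Sum>i\<in>I - {t} - {s}. q i * g i)"
    using assms by (simp add: sum.remove[of "I - {t}" s])
  also have "\<dots> = q t * g t + (q s * g s + (\<Sum>i\<in>I - {t} - {s}. q i * g i))"
    using assms(5) by (simp add: algebra_simps)
  also have "\<dots> = (\<Sum>i\<in>I. q i * g i)"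
    using assms by (simp add: sum.remove[of I t] sum.remove[of "I - {t}" s])
  finally show ?thesis .
qed

lemma ifs_lyapunov_merge:
  assumes "finite I" "s \<in> I" "t \<in> I" "s \<noteq> t" "c s = c t"
  shows "ifs_lyapunov (I - {t}) (q(s := q s + q t)) c = ifs_lyapunov I q c"
  unfolding ifs_lyapunov_def using sum_merge_weights[OF assms(1-4), of "\<lambda>i. ln (c i)"] assms(5) by simp

lemma ifs_entropy_merge_less:
  assumes "finite I" "s \<in> I" "t \<in> I" "s \<noteq> t" "0 < q s" "0 < q t"
  shows "ifs_entropy (I - {t}) (q(s := q s + q t)) < ifs_entropy I q"
proof -
  define rest where "rest = (\<Sum>i\<in>I - {t} - {s}. q i * ln (q i))"
  have "ifs_entropy (I - {t}) (q(s := q s + q t)) = - ((q s + q t) * ln (q s + q t) + rest)"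
    using assms by (simp add: ifs_entropy_def rest_def sum.remove[of "I - {t}" s])
  moreover have "ifs_entropy I q = - (q t * ln (q t) + (q s * ln (q s) + rest))"
    using assms by (simp add: ifs_entropy_def rest_def sum.remove[of I t] sum.remove[of "I - {t}" s])
  moreover have "q s * ln (q s) < q s * ln (q s + q t)" "q t * ln (q t) < q t * ln (q s + q t)"
    using assms(5,6) by (simp_all add: mult_strict_left_mono)
  ultimately show ?thesis
    by (simp add: algebra_simps)
qed

section \<open>Self-similar measures of affine contractions\<close>

locale self_similar_measure =
  fixes I :: "'a set" and q c b :: "'a \<Rightarrow> real" and \<mu> :: "real measure" and R :: real
  assumes finite_I: "finite I"
    and q_pos: "\<And>i. i \<in> I \<Longrightarrow> 0 < q i" and sum_q: "(\<Sum>i\<in>I. q i) = 1"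
    and c_pos: "\<And>i. i \<in> I \<Longrightarrow> 0 < c i" and c_less_1: "\<And>i. i \<in> I \<Longrightarrow> c i < 1"
    and prob_space_\<mu>: "prob_space \<mu>" and sets_\<mu>: "sets \<mu> = sets borel"
    and self_similar: "\<And>A. A \<in> sets borel \<Longrightarrow>
          measure \<mu> A = (\<Sum>i\<in>I. q i * measure \<mu> ((\<lambda>x. c i * x + b i) -` A))"
    and support: "measure \<mu> {-R..R} = 1"
begin

sublocale prob_space \<mu>
  by (rule prob_space_\<mu>)

lemma space_\<mu> [simp]: "space \<mu> = UNIV"
  using sets_eq_imp_space_eq[OF sets_\<mu>] by simp

lemma R_nonneg: "0 \<le> R"
proof (rule ccontr)
  assume "\<not> 0 \<le> R"
  then have "{-R..R} = {}"
    by auto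
  with support show False
    by simp
qed

lemma measure_iterate:
  assumes "A \<in> sets borel"
  shows "measure \<mu> A = (\<Sum>w\<in>words I K. prod_list (map q w) * measure \<mu> (affine_comp c b w -` A))"
  using assms
proof (induction K arbitrary: A)
  case (Suc K)
  have "measure \<mu> A = (\<Sum>i\<in>I. q i * measure \<mu> ((\<lambda>x. c i * x + b i) -` A))"
    by (rule self_similar[OF Suc.prems])
  also have "\<dots> = (\<Sum>i\<in>I. q i * (\<Sum>w\<in>words I K. prod_list (map q w) *
                       measure \<mu> (affine_comp c b w -` (\<lambda>x. c i * x + b i) -` A)))"
  proof -
    have "(\<lambda>x. c i * x + b i) -` A \<in> sets borel" for i
      by (rule measurable_sets_borel[OF _ Suc.prems]) simp
    then show ?thesis
      by (simp add: Suc.IH)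
  qed
  also have "\<dots> = (\<Sum>w\<in>words I (Suc K). prod_list (map q w) * measure \<mu> (affine_comp c b w -` A))"
    by (simp add: sum_words_Suc sum_distrib_left vimage_def mult.assoc)
  finally show ?case .
qed (simp add: vimage_def)

definition cylinder :: "'a list \<Rightarrow> real set" where
  "cylinder w = affine_comp c b w ` {-R..R}"

lemma compact_cylinder: "compact (cylinder w)"
  unfolding cylinder_def by (intro compact_affine_comp_image compact_Icc)

lemma cylinder_borel [measurable]: "cylinder w \<in> sets borel"
  by (intro borel_closed compact_imp_closed compact_cylinder)

lemma measure_outside_cylinders_le:
  assumes "W \<subseteq> words I K"
  shows "measure \<mu> (UNIV - (\<Union>w\<in>W. cylinder w)) \<le> (\<Sum>w\<in>words I K - W. prod_list (map q w))"
proof -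
  define C where "C = UNIV - (\<Union>w\<in>W. cylinder w)"
  have "finite W"
    using assms finite_words[OF finite_I] by (rule finite_subset)
  then have C_borel: "C \<in> sets borel"
    unfolding C_def Compl_eq_Diff_UNIV[symmetric] by (intro borel_comp sets.finite_UN) auto
  have null: "prob (UNIV - {-R..R}) = 0"
    using prob_compl[of "{-R..R}"] support sets_\<mu> by (simp add: Compl_eq_Diff_UNIV)
  have "measure \<mu> C = (\<Sum>w\<in>words I K. prod_list (map q w) * measure \<mu> (affine_comp c b w -` C))"
    by (rule measure_iterate[OF C_borel])
  also have "\<dots> \<le> (\<Sum>w\<in>words I K. if w \<in> W then 0 else prod_list (map q w))"
  proof (rule sum_mono)
    fix w assume "w \<in> words I K"
    then have q_w: "0 \<le> prod_list (map q w)"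
      using q_pos by (intro prod_list_nonneg) (auto simp: words_def less_imp_le)
    show "prod_list (map q w) * measure \<mu> (affine_comp c b w -` C)
        \<le> (if w \<in> W then 0 else prod_list (map q w))"
    proof (cases "w \<in> W")
      case True
      then have "affine_comp c b w -` C \<subseteq> UNIV - {-R..R}"
        by (auto simp: C_def cylinder_def)
      then have "measure \<mu> (affine_comp c b w -` C) \<le> 0"
        using null sets_\<mu> by (metis finite_measure_mono borel_comp Compl_eq_Diff_UNIV atLeastAtMost_borel)
      then show ?thesis
        using True q_w by (simp add: measure_le_0_iff)
    qed (use q_w in \<open>simp add: mult_left_le\<close>)
  qed
  also have "\<dots> = (\<Sum>w\<in>words I K - W. prod_list (map q w))"
    by (simp add: sum.If_cases finite_words[OF finite_I] Diff_eq)
  finally show ?thesis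
    unfolding C_def .
qed

text \<open>\<open>w\<close> is good iff \<open>c\<^sub>w\<^sup>d exp (\<eta> |w|) \<le> q\<^sub>w\<close>: its cylinder carries much mass for its \<open>d\<close>-dimensional size.\<close>

definition good_words :: "real \<Rightarrow> real \<Rightarrow> nat \<Rightarrow> 'a list set" where
  "good_words \<eta> d K = {w \<in> words I K. (\<Sum>i\<leftarrow>w. \<eta> + d * ln (c i) - ln (q i)) \<le> 0}"

lemma diameter_cylinder_good_le:
  assumes "0 \<le> d" and "w \<in> good_words \<eta> d K"
  shows "diameter (cylinder w) powr d \<le> (2 * R) powr d * exp (- \<eta>) ^ K * prod_list (map q w)"
proof -
  from assms(2) have w: "set w \<subseteq> I" "length w = K"
    and good: "(\<Sum>i\<leftarrow>w. \<eta> + d * ln (c i) - ln (q i)) \<le> 0"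
    by (auto simp: good_words_def words_def)
  have c_w: "0 < prod_list (map c w)" and q_w: "0 < prod_list (map q w)"
    using w c_pos q_pos by (auto intro!: prod_list_pos)
  have "d * ln (prod_list (map c w)) \<le> ln (prod_list (map q w)) - \<eta> * K"
    using good w c_pos q_pos
    by (simp add: ln_prod_list sum_list_addf sum_list_subtractf sum_list_const_mult sum_list_triv
        subset_iff algebra_simps)
  then have "exp (d * ln (prod_list (map c w))) \<le> exp (ln (prod_list (map q w)) - \<eta> * K)"
    by simp
  then have c_w_powr: "prod_list (map c w) powr d \<le> exp (- \<eta>) ^ K * prod_list (map q w)"
    using c_w q_w by (simp add: powr_def exp_diff exp_of_nat_mult[symmetric] exp_minus field_simps)
  have "diameter (cylinder w) \<le> prod_list (map c w) * (2 * R)"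
    unfolding cylinder_def using w c_pos R_nonneg
    by (intro diameter_affine_comp_image_le) (auto simp: subset_iff less_imp_le)
  then have "diameter (cylinder w) powr d \<le> (prod_list (map c w) * (2 * R)) powr d"
    using assms(1) compact_cylinder by (intro powr_mono2) (auto intro: diameter_ge_0 compact_imp_bounded)
  also have "\<dots> = prod_list (map c w) powr d * (2 * R) powr d"
    using c_w R_nonneg by (simp add: powr_mult)
  also have "\<dots> \<le> exp (- \<eta>) ^ K * prod_list (map q w) * (2 * R) powr d"
    using c_w_powr by (intro mult_right_mono) auto
  finally show ?thesis
    by (simp add: ac_simps)
qed

lemma measure_outside_good_cylinders_le:
  assumes "0 \<le> \<theta>"
  shows "measure \<mu> (UNIV - (\<Union>w\<in>good_words \<eta> d K. cylinder w))
           \<le> (\<Sum>i\<in>I. q i * exp (\<theta> * (\<eta> + d * ln (c i) - ln (q i)))) ^ K"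
proof -
  have "words I K - good_words \<eta> d K
      = {w \<in> words I K. 0 < (\<Sum>i\<leftarrow>w. \<eta> + d * ln (c i) - ln (q i))}"
    by (auto simp: good_words_def)
  then have "measure \<mu> (UNIV - (\<Union>w\<in>good_words \<eta> d K. cylinder w))
      \<le> (\<Sum>w\<in>{w \<in> words I K. 0 < (\<Sum>i\<leftarrow>w. \<eta> + d * ln (c i) - ln (q i))}. prod_list (map q w))"
    using measure_outside_cylinders_le[of "good_words \<eta> d K" K] by (simp add: good_words_def)
  also have "\<dots> \<le> (\<Sum>i\<in>I. q i * exp (\<theta> * (\<eta> + d * ln (c i) - ln (q i)))) ^ K"
    using q_pos by (intro chernoff_bound_words finite_I assms less_imp_le)
  finally show ?thesis .
qed

lemma finite_good_words: "finite (good_words \<eta> d K)"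
  unfolding good_words_def by (auto intro: finite_subset[OF _ finite_words[OF finite_I]])

lemma good_cylinders_borel: "(\<Union>K. \<Union>w\<in>good_words \<eta> d (N + K). cylinder w) \<in> sets borel"
  using finite_good_words by (intro sets.countable_UN sets.finite_UN) auto

lemma prob_good_cylinders:
  assumes "0 \<le> \<theta>" and "(\<Sum>i\<in>I. q i * exp (\<theta> * (\<eta> + d * ln (c i) - ln (q i)))) < 1"
  shows "prob (\<Union>K. \<Union>w\<in>good_words \<eta> d (N + K). cylinder w) = 1"
proof -
  define \<rho> where "\<rho> = (\<Sum>i\<in>I. q i * exp (\<theta> * (\<eta> + d * ln (c i) - ln (q i))))"
  define F where "F = (\<Union>K. \<Union>w\<in>good_words \<eta> d (N + K). cylinder w)"
  have F_event: "F \<in> events"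
    using good_cylinders_borel sets_\<mu> by (simp add: F_def)
  have "0 \<le> \<rho>"
    unfolding \<rho>_def using q_pos by (intro sum_nonneg) (simp add: less_imp_le)
  have "prob (UNIV - F) \<le> \<rho> ^ (N + K)" for K
  proof -
    have "(\<Union>w\<in>good_words \<eta> d (N + K). cylinder w) \<in> events"
      using finite_good_words sets_\<mu> by auto
    from sets.compl_sets[OF this]
    have "prob (UNIV - F) \<le> prob (UNIV - (\<Union>w\<in>good_words \<eta> d (N + K). cylinder w))"
      by (intro finite_measure_mono) (auto simp: F_def)
    also have "\<dots> \<le> \<rho> ^ (N + K)"
      unfolding \<rho>_def by (rule measure_outside_good_cylinders_le[OF assms(1)])
    finally show ?thesis .
  qed
  moreover have "(\<lambda>K. \<rho> ^ (N + K)) \<longlonglongrightarrow> 0"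
    using \<open>0 \<le> \<rho>\<close> assms(2) unfolding power_add \<rho>_def[symmetric]
    by (intro tendsto_mult_right_zero LIMSEQ_power_zero) auto
  ultimately have "prob (UNIV - F) \<le> 0"
    by (intro LIMSEQ_le_const) auto
  then have "1 \<le> prob F"
    using prob_compl[OF F_event] by simp
  then show ?thesis
    unfolding F_def[symmetric] using prob_le_1[of F] by linarith
qed

lemma sum_diameter_good_cylinders_le:
  assumes "0 \<le> d" and "0 < \<eta>"
  shows "(\<Sum>K<M. \<Sum>w\<in>good_words \<eta> d (N + K). diameter (cylinder w) powr d)
           \<le> (2 * R) powr d * exp (- \<eta>) ^ N / (1 - exp (- \<eta>))"
proof -
  let ?x = "exp (- \<eta>)"
  have x: "0 < ?x" "?x < 1"
    using assms(2) by auto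
  have mass_le_1: "(\<Sum>w\<in>good_words \<eta> d K. prod_list (map q w)) \<le> 1" for K
  proof -
    have "(\<Sum>w\<in>good_words \<eta> d K. prod_list (map q w)) \<le> (\<Sum>w\<in>words I K. prod_list (map q w))"
      using q_pos by (intro sum_mono2 finite_words finite_I prod_list_nonneg)
        (auto simp: good_words_def words_def less_imp_le)
    then show ?thesis
      by (simp add: sum_prod_list_words sum_q)
  qed
  have "(\<Sum>K<M. \<Sum>w\<in>good_words \<eta> d (N + K). diameter (cylinder w) powr d)
      \<le> (\<Sum>K<M. (2 * R) powr d * ?x ^ (N + K) * (\<Sum>w\<in>good_words \<eta> d (N + K). prod_list (map q w)))"
    unfolding sum_distrib_left by (intro sum_mono diameter_cylinder_good_le assms(1))
  also have "\<dots> \<le> (\<Sum>K<M. (2 * R) powr d * ?x ^ N * ?x ^ K)"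
  proof (intro sum_mono)
    fix K
    show "(2 * R) powr d * ?x ^ (N + K) * (\<Sum>w\<in>good_words \<eta> d (N + K). prod_list (map q w))
        \<le> (2 * R) powr d * ?x ^ N * ?x ^ K"
      using mult_left_le[OF mass_le_1[of "N + K"], of "(2 * R) powr d * ?x ^ (N + K)"] x
      by (simp add: power_add mult.assoc)
  qed
  also have "\<dots> = (2 * R) powr d * ?x ^ N * ((1 - ?x ^ M) / (1 - ?x))"
    using x by (simp add: sum_distrib_left[symmetric] sum_gp_strict)
  also have "\<dots> \<le> (2 * R) powr d * ?x ^ N / (1 - ?x)"
    using x by (simp add: divide_right_mono mult_left_le)
  finally show ?thesis .
qed

lemma prob_limsup_good_cylinders:
  assumes "0 \<le> \<theta>" and "(\<Sum>i\<in>I. q i * exp (\<theta> * (\<eta> + d * ln (c i) - ln (q i)))) < 1"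
  shows "prob (\<Inter>N. \<Union>K. \<Union>w\<in>good_words \<eta> d (N + K). cylinder w) = 1"
proof -
  have "AE x in \<mu>. x \<in> (\<Union>K. \<Union>w\<in>good_words \<eta> d (N + K). cylinder w)" for N
    using prob_good_cylinders[OF assms] prob_eq_1 good_cylinders_borel sets_\<mu> by simp
  then have "AE x in \<mu>. x \<in> (\<Inter>N. \<Union>K. \<Union>w\<in>good_words \<eta> d (N + K). cylinder w)"
    by (simp add: AE_all_countable)
  then show ?thesis
    using prob_eq_1 good_cylinders_borel sets_\<mu> by (simp add: sets.countable_INT)
qed

lemma hausdorff_outer_limsup_good_cylinders:
  assumes "0 < d" and "0 < \<eta>"
  shows "hausdorff_outer d (\<Inter>N. \<Union>K. \<Union>w\<in>good_words \<eta> d (N + K). cylinder w) = 0"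
proof (rule hausdorff_outer_eq_0I[OF \<open>0 < d\<close>])
  fix \<epsilon> :: real
  assume "0 < \<epsilon>"
  define C where "C = (2 * R) powr d / (1 - exp (- \<eta>))"
  have "(\<lambda>N. C * exp (- \<eta>) ^ N) \<longlonglongrightarrow> 0"
    using \<open>0 < \<eta>\<close> by (intro tendsto_mult_right_zero LIMSEQ_power_zero) auto
  then have "\<forall>\<^sub>F N in sequentially. C * exp (- \<eta>) ^ N < \<epsilon>"
    using \<open>0 < \<epsilon>\<close> by (rule order_tendstoD(2))
  then obtain N0 where "\<forall>N\<ge>N0. C * exp (- \<eta>) ^ N < \<epsilon>"
    by (auto simp: eventually_sequentially)
  then have N0: "C * exp (- \<eta>) ^ N0 < \<epsilon>"
    by simp
  show "\<exists>(G :: nat \<Rightarrow> 'a list set) V.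
      (\<Inter>N. \<Union>K. \<Union>w\<in>good_words \<eta> d (N + K). cylinder w) \<subseteq> (\<Union>K. \<Union>x\<in>G K. V x) \<and>
      (\<forall>K. finite (G K)) \<and> (\<forall>K. \<forall>x\<in>G K. bounded (V x)) \<and>
      (\<forall>M. (\<Sum>K<M. \<Sum>x\<in>G K. diameter (V x) powr d) \<le> \<epsilon>)"
  proof (intro exI[of _ "\<lambda>K. good_words \<eta> d (N0 + K)"] exI[of _ cylinder] conjI allI ballI)
    show "(\<Sum>K<M. \<Sum>w\<in>good_words \<eta> d (N0 + K). diameter (cylinder w) powr d) \<le> \<epsilon>" for M
      using sum_diameter_good_cylinders_le[of d \<eta> N0 M] \<open>0 < d\<close> \<open>0 < \<eta>\<close> N0
      by (simp add: C_def)
  qed (auto simp: finite_good_words compact_imp_bounded compact_cylinder)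
qed

lemma exists_full_measure_hausdorff_null:
  assumes "0 < d" and "ifs_entropy I q < d * ifs_lyapunov I q c"
  shows "\<exists>E\<in>sets borel. prob E = 1 \<and> hausdorff_outer d E = 0"
proof -
  txt \<open>With \<open>\<eta>\<close> half the gap, the exponent \<open>L\<^sub>i = \<eta> + d ln c\<^sub>i - ln q\<^sub>i\<close> of \<open>good_words\<close> has
    mean \<open>-\<eta>\<close>, so some positive exponential moment of \<open>L\<close> is below 1.\<close>
  define \<eta> where "\<eta> = (d * ifs_lyapunov I q c - ifs_entropy I q) / 2"
  have "0 < \<eta>"
    using assms(2) by (simp add: \<eta>_def)
  have "(\<Sum>i\<in>I. q i * (\<eta> + d * ln (c i) - ln (q i)))
      = \<eta> * (\<Sum>i\<in>I. q i) - d * ifs_lyapunov I q c + ifs_entropy I q"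
    by (simp add: ifs_entropy_def ifs_lyapunov_def algebra_simps sum.distrib sum_subtractf sum_distrib_left)
  also have "\<dots> = - \<eta>"
    using sum_q by (simp add: \<eta>_def field_simps)
  finally obtain \<theta> where "0 < \<theta>" and \<theta>: "(\<Sum>i\<in>I. q i * exp (\<theta> * (\<eta> + d * ln (c i) - ln (q i)))) < 1"
    using exists_exp_moment_less_1[OF finite_I sum_q] \<open>0 < \<eta>\<close> by force
  show ?thesis
  proof (intro bexI conjI)
    show "prob (\<Inter>N. \<Union>K. \<Union>w\<in>good_words \<eta> d (N + K). cylinder w) = 1"
      using \<open>0 < \<theta>\<close> \<theta> by (intro prob_limsup_good_cylinders) auto
    show "hausdorff_outer d (\<Inter>N. \<Union>K. \<Union>w\<in>good_words \<eta> d (N + K). cylinder w) = 0"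
      using \<open>0 < d\<close> \<open>0 < \<eta>\<close> by (rule hausdorff_outer_limsup_good_cylinders)
    show "(\<Inter>N. \<Union>K. \<Union>w\<in>good_words \<eta> d (N + K). cylinder w) \<in> sets borel"
      using good_cylinders_borel by (simp add: sets.countable_INT)
  qed
qed

theorem hausdorff_dim_measure_le_entropy_div_lyapunov:
  "hausdorff_dim_measure \<mu> \<le> ifs_entropy I q / ifs_lyapunov I q c"
proof (rule dense_ge)
  have lyapunov_pos: "0 < ifs_lyapunov I q c"
    using finite_I sum_q q_pos c_pos c_less_1 by (rule ifs_lyapunov_pos)
  fix d
  assume "ifs_entropy I q / ifs_lyapunov I q c < d"
  then have "ifs_entropy I q < d * ifs_lyapunov I q c"
    using lyapunov_pos by (simp add: divide_less_eq)
  moreover from this have "0 < d * ifs_lyapunov I q c"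
    using ifs_entropy_nonneg[OF finite_I sum_q q_pos] by linarith
  then have "0 < d"
    using lyapunov_pos by (simp add: zero_less_mult_iff)
  ultimately obtain E where "E \<in> sets borel" "prob E = 1" "hausdorff_outer d E = 0"
    using exists_full_measure_hausdorff_null by blast
  then show "hausdorff_dim_measure \<mu> \<le> d"
    using \<open>0 < d\<close> by (intro hausdorff_dim_measure_le)
qed

lemma cong:
  assumes "\<And>i. i \<in> I \<Longrightarrow> q' i = q i" "\<And>i. i \<in> I \<Longrightarrow> c' i = c i" "\<And>i. i \<in> I \<Longrightarrow> b' i = b i"
  shows "self_similar_measure I q' c' b' \<mu> R"
proof
  show "(\<Sum>i\<in>I. q' i) = 1"
    using sum_q assms(1) by simp
  show "measure \<mu> A = (\<Sum>i\<in>I. q' i * measure \<mu> ((\<lambda>x. c' i * x + b' i) -` A))" if "A \<in> sets borel" for A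
    using self_similar[OF that] assms by simp
qed (use finite_I q_pos c_pos c_less_1 prob_space_\<mu> sets_\<mu> support assms in auto)

lemma merge_equal_maps:
  assumes "s \<in> I" "t \<in> I" "s \<noteq> t" "c s = c t" "b s = b t"
  shows "self_similar_measure (I - {t}) (q(s := q s + q t)) c b \<mu> R"
proof
  show "(\<Sum>i\<in>I - {t}. (q(s := q s + q t)) i) = 1"
    using sum_merge_weights[OF finite_I assms(1-3), of "\<lambda>_. 1" q] sum_q by simp
  show "measure \<mu> A = (\<Sum>i\<in>I - {t}. (q(s := q s + q t)) i * measure \<mu> ((\<lambda>x. c i * x + b i) -` A))"
    if "A \<in> sets borel" for A
    using sum_merge_weights[OF finite_I assms(1-3), of "\<lambda>i. measure \<mu> ((\<lambda>x. c i * x + b i) -` A)" q]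
      self_similar[OF that] assms(4,5) by simp
qed (use finite_I q_pos c_pos c_less_1 prob_space_\<mu> sets_\<mu> support assms in \<open>auto intro: add_pos_pos\<close>)

lemma iterated_system:
  assumes "0 < K"
  shows "self_similar_measure (words I K) (\<lambda>w. prod_list (map q w)) (\<lambda>w. prod_list (map c w))
           (\<lambda>w. affine_comp c b w 0) \<mu> R"
proof
  show "prod_list (map c w) < 1" if "w \<in> words I K" for w
    using that assms c_pos c_less_1 by (intro prod_list_less_1) (auto simp: words_def)
  show "measure \<mu> A = (\<Sum>w\<in>words I K. prod_list (map q w) *
          measure \<mu> ((\<lambda>x. prod_list (map c w) * x + affine_comp c b w 0) -` A))"
    if "A \<in> sets borel" for A
    using measure_iterate[OF that, of K] by (simp add: affine_comp_linear[symmetric])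
  show "(\<Sum>w\<in>words I K. prod_list (map q w)) = 1"
    by (simp add: sum_prod_list_words sum_q)
qed (use finite_words[OF finite_I] q_pos c_pos prob_space_\<mu> sets_\<mu> support
      in \<open>auto simp: words_def intro!: prod_list_pos\<close>)

end

section \<open>The self-similar measure of \<open>T1\<close> and \<open>T2\<close>\<close>

lemma norm_le_if_mixture_of_dilations:
  fixes f :: "real \<Rightarrow> 'b::real_normed_vector"
  assumes "0 \<le> p" "p \<le> 1" and "0 \<le> \<beta>" "\<bar>\<beta>1\<bar> \<le> \<beta>" "\<bar>\<beta>2\<bar> \<le> \<beta>"
    and le: "\<And>\<xi>. norm (f \<xi>) \<le> p * norm (f (\<xi> * \<beta>1)) + (1 - p) * norm (f (\<xi> * \<beta>2))"
    and small: "\<And>x. \<bar>x\<bar> < \<delta> \<Longrightarrow> norm (f x) \<le> \<epsilon>"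
  shows "\<bar>x\<bar> * \<beta> ^ k < \<delta> \<Longrightarrow> norm (f x) \<le> \<epsilon>"
proof (induction k arbitrary: x)
  case 0
  then show ?case
    using small by simp
next
  case (Suc k)
  have "norm (f (x * \<beta>i)) \<le> \<epsilon>" if "\<bar>\<beta>i\<bar> \<le> \<beta>" for \<beta>i
  proof (rule Suc.IH)
    have "\<bar>x * \<beta>i\<bar> * \<beta> ^ k = (\<bar>x\<bar> * \<beta> ^ k) * \<bar>\<beta>i\<bar>"
      by (simp add: abs_mult)
    also have "\<dots> \<le> (\<bar>x\<bar> * \<beta> ^ k) * \<beta>"
      using that \<open>0 \<le> \<beta>\<close> by (intro mult_left_mono) auto
    also have "\<dots> < \<delta>"
      using Suc.prems by (simp add: ac_simps)
    finally show "\<bar>x * \<beta>i\<bar> * \<beta> ^ k < \<delta>" .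
  qed
  then have "p * norm (f (x * \<beta>1)) + (1 - p) * norm (f (x * \<beta>2)) \<le> p * \<epsilon> + (1 - p) * \<epsilon>"
    using assms(1,2,4,5) by (intro add_mono mult_left_mono) auto
  then show ?case
    using le[of x] by (simp add: algebra_simps)
qed

lemma eq_0_if_norm_le_mixture_of_dilations:
  fixes f :: "real \<Rightarrow> 'b::real_normed_vector"
  assumes "isCont f 0" and "f 0 = 0" and "0 \<le> p" "p \<le> 1"
    and "\<bar>\<beta>1\<bar> < 1" "\<bar>\<beta>2\<bar> < 1"
    and le: "\<And>\<xi>. norm (f \<xi>) \<le> p * norm (f (\<xi> * \<beta>1)) + (1 - p) * norm (f (\<xi> * \<beta>2))"
  shows "f \<xi> = 0"
proof -
  define \<beta> where "\<beta> = max \<bar>\<beta>1\<bar> \<bar>\<beta>2\<bar>"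
  have "0 \<le> \<beta>" "\<beta> < 1"
    using assms(5,6) by (auto simp: \<beta>_def)
  have arbitrarily_small: "norm (f \<xi>) \<le> \<epsilon>" if "0 < \<epsilon>" for \<epsilon>
  proof -
    have "f \<midarrow>0\<rightarrow> 0"
      using assms(1,2) by (simp add: isCont_def)
    then obtain \<delta> where "0 < \<delta>" and \<delta>: "\<And>x. x \<noteq> 0 \<and> norm x < \<delta> \<Longrightarrow> norm (f x) < \<epsilon>"
      using \<open>0 < \<epsilon>\<close> unfolding LIM_eq by auto
    have small: "norm (f x) \<le> \<epsilon>" if "\<bar>x\<bar> < \<delta>" for x
      using \<delta>[of x] that assms(2) \<open>0 < \<epsilon>\<close> by (cases "x = 0") auto
    obtain k where k: "\<beta> ^ k < \<delta> / (\<bar>\<xi>\<bar> + 1)"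
      using real_arch_pow_inv[of "\<delta> / (\<bar>\<xi>\<bar> + 1)" \<beta>] \<open>\<beta> < 1\<close> \<open>0 < \<delta>\<close> by auto
    have "\<bar>\<xi>\<bar> * \<beta> ^ k \<le> (\<bar>\<xi>\<bar> + 1) * \<beta> ^ k"
      using \<open>0 \<le> \<beta>\<close> by (intro mult_right_mono) auto
    also have "\<dots> < \<delta>"
      using k by (simp add: field_simps add_pos_nonneg)
    finally show ?thesis
      using norm_le_if_mixture_of_dilations[OF assms(3,4) \<open>0 \<le> \<beta>\<close> _ _ le small]
      by (simp add: \<beta>_def)
  qed
  show ?thesis
  proof (rule ccontr)
    assume "f \<xi> \<noteq> 0"
    then show False
      using arbitrarily_small[of "norm (f \<xi>) / 2"] by simp
  qed
qed

definition digit_contr :: "real \<Rightarrow> real \<Rightarrow> bool \<Rightarrow> real" where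
  "digit_contr \<beta>1 \<beta>2 x = (if x then \<beta>1 else \<beta>2)"

definition digit_sign :: "bool \<Rightarrow> real" where
  "digit_sign x = (if x then 1 else -1)"

lemma T_eq_digit_affine:
  "(if x then T1 \<beta>1 else T2 \<beta>2) y = digit_contr \<beta>1 \<beta>2 x * y + digit_contr \<beta>1 \<beta>2 x * digit_sign x"
  by (simp add: T1_def T2_def digit_contr_def digit_sign_def)

text \<open>The point with address \<open>\<omega>\<close>, i.e. the limit of \<open>T\<^bsub>\<omega>\<^sub>0\<^esub> \<circ> \<dots> \<circ> T\<^bsub>\<omega>\<^sub>k\<^esub> 0\<close>,
  where \<open>True\<close> selects \<open>T1\<close>.\<close>
definition coding :: "real \<Rightarrow> real \<Rightarrow> bool stream \<Rightarrow> real" where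
  "coding \<beta>1 \<beta>2 \<omega> = (\<Sum>k. (\<Prod>i\<le>k. digit_contr \<beta>1 \<beta>2 (\<omega> !! i)) * digit_sign (\<omega> !! k))"

context
  fixes \<beta>1 \<beta>2 :: real
  assumes \<beta>1: "0 < \<beta>1" "\<beta>1 < 1" and \<beta>2: "0 < \<beta>2" "\<beta>2 < 1"
begin

lemma abs_coding_term_le:
  "\<bar>(\<Prod>i\<le>k. digit_contr \<beta>1 \<beta>2 (\<omega> !! i)) * digit_sign (\<omega> !! k)\<bar> \<le> max \<beta>1 \<beta>2 ^ Suc k"
proof -
  have "\<bar>(\<Prod>i\<le>k. digit_contr \<beta>1 \<beta>2 (\<omega> !! i)) * digit_sign (\<omega> !! k)\<bar>
      = (\<Prod>i\<le>k. digit_contr \<beta>1 \<beta>2 (\<omega> !! i))"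
    using \<beta>1 \<beta>2 by (simp add: digit_sign_def digit_contr_def abs_mult abs_prod abs_of_pos)
  also have "\<dots> \<le> (\<Prod>i\<le>k. max \<beta>1 \<beta>2)"
    using \<beta>1 \<beta>2 by (intro prod_mono) (auto simp: digit_contr_def)
  finally show ?thesis
    by simp
qed

lemma summable_coding_terms:
  "summable (\<lambda>k. \<bar>(\<Prod>i\<le>k. digit_contr \<beta>1 \<beta>2 (\<omega> !! i)) * digit_sign (\<omega> !! k)\<bar>)"
proof (rule summable_comparison_test'[of "\<lambda>k. max \<beta>1 \<beta>2 ^ Suc k" 0])
  show "summable (\<lambda>k. max \<beta>1 \<beta>2 ^ Suc k)"
    using \<beta>1 \<beta>2 by (simp add: summable_geometric)
qed (use abs_coding_term_le in simp)

lemma abs_coding_le: "\<bar>coding \<beta>1 \<beta>2 \<omega>\<bar> \<le> max \<beta>1 \<beta>2 / (1 - max \<beta>1 \<beta>2)"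
proof -
  let ?\<beta> = "max \<beta>1 \<beta>2"
  have "\<bar>coding \<beta>1 \<beta>2 \<omega>\<bar> \<le> (\<Sum>k. \<bar>(\<Prod>i\<le>k. digit_contr \<beta>1 \<beta>2 (\<omega> !! i)) * digit_sign (\<omega> !! k)\<bar>)"
    unfolding coding_def
    using summable_norm[of "\<lambda>k. (\<Prod>i\<le>k. digit_contr \<beta>1 \<beta>2 (\<omega> !! i)) * digit_sign (\<omega> !! k)"]
      summable_coding_terms[of \<omega>] by simp
  also have "\<dots> \<le> (\<Sum>k. ?\<beta> ^ Suc k)"
    using \<beta>1 \<beta>2 by (intro suminf_le summable_coding_terms abs_coding_term_le) (simp add: summable_geometric)
  also have "\<dots> = ?\<beta> / (1 - ?\<beta>)"
    using \<beta>1 \<beta>2 suminf_geometric[of ?\<beta>] by (simp add: suminf_mult)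
  finally show ?thesis .
qed

lemma coding_Cons: "coding \<beta>1 \<beta>2 (x ## \<omega>) = (if x then T1 \<beta>1 else T2 \<beta>2) (coding \<beta>1 \<beta>2 \<omega>)"
proof -
  let ?t = "\<lambda>\<omega> k. (\<Prod>i\<le>k. digit_contr \<beta>1 \<beta>2 (\<omega> !! i)) * digit_sign (\<omega> !! k)"
  have summable: "summable (?t \<omega>)" for \<omega>
    by (rule summable_rabs_cancel[OF summable_coding_terms])
  have shift: "?t (x ## \<omega>) (Suc k) = digit_contr \<beta>1 \<beta>2 x * ?t \<omega> k" for k
    by (simp only: prod.atMost_Suc_shift) simp
  have "coding \<beta>1 \<beta>2 (x ## \<omega>) = (\<Sum>k. ?t (x ## \<omega>) (Suc k)) + ?t (x ## \<omega>) 0"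
    unfolding coding_def using suminf_split_head[OF summable[of "x ## \<omega>"]] by simp
  also have "\<dots> = digit_contr \<beta>1 \<beta>2 x * coding \<beta>1 \<beta>2 \<omega> + digit_contr \<beta>1 \<beta>2 x * digit_sign x"
    unfolding shift coding_def using summable by (simp add: suminf_mult)
  finally show ?thesis
    by (simp add: T_eq_digit_affine)
qed

lemma coding_measurable [measurable]:
  "coding \<beta>1 \<beta>2 \<in> borel_measurable (stream_space (measure_pmf M))"
proof (rule borel_measurable_LIMSEQ_real)
  fix \<omega>
  show "(\<lambda>n. \<Sum>k<n. (\<Prod>i\<le>k. digit_contr \<beta>1 \<beta>2 (\<omega> !! i)) * digit_sign (\<omega> !! k)) \<longlonglongrightarrow> coding \<beta>1 \<beta>2 \<omega>"
    unfolding coding_def by (intro summable_LIMSEQ summable_rabs_cancel[OF summable_coding_terms])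
next
  fix n
  show "(\<lambda>\<omega>. \<Sum>k<n. (\<Prod>i\<le>k. digit_contr \<beta>1 \<beta>2 (\<omega> !! i)) * digit_sign (\<omega> !! k))
      \<in> borel_measurable (stream_space (measure_pmf M))"
    unfolding digit_contr_def digit_sign_def by measurable
qed

end

definition is_ssm :: "real \<Rightarrow> real \<Rightarrow> real \<Rightarrow> real measure \<Rightarrow> bool" where
  "is_ssm p \<beta>1 \<beta>2 \<mu> \<longleftrightarrow> sets \<mu> = sets borel \<and> prob_space \<mu> \<and>
      (\<forall>A \<in> sets borel. emeasure \<mu> A =
          ennreal p * emeasure (distr \<mu> borel (T1 \<beta>1)) A
        + ennreal (1 - p) * emeasure (distr \<mu> borel (T2 \<beta>2)) A)"

lemma T1_measurable [measurable]: "T1 \<beta>1 \<in> borel_measurable borel"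
  unfolding T1_def[abs_def] by measurable

lemma T2_measurable [measurable]: "T2 \<beta>2 \<in> borel_measurable borel"
  unfolding T2_def[abs_def] by measurable

lemma emeasure_distr_eq_nn_integral:
  assumes "f \<in> measurable M N" "A \<in> sets N"
  shows "emeasure (distr M N f) A = (\<integral>\<^sup>+x. indicator A (f x) \<partial>M)"
proof -
  have "emeasure (distr M N f) A = (\<integral>\<^sup>+y. indicator A y \<partial>distr M N f)"
    using assms(2) by simp
  also have "\<dots> = (\<integral>\<^sup>+x. indicator A (f x) \<partial>M)"
    using assms by (intro nn_integral_distr) auto
  finally show ?thesis .
qed

lemma is_ssm_coding_distr:
  assumes "0 < \<beta>1" "\<beta>1 < 1" "0 < \<beta>2" "\<beta>2 < 1" and "0 \<le> p" "p \<le> 1"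
  shows "is_ssm p \<beta>1 \<beta>2 (distr (stream_space (measure_pmf (bernoulli_pmf p))) borel (coding \<beta>1 \<beta>2))"
proof -
  define S where "S = stream_space (measure_pmf (bernoulli_pmf p))"
  define \<mu> where "\<mu> = distr S borel (coding \<beta>1 \<beta>2)"
  have prob_space_S: "prob_space S"
    unfolding S_def by (rule prob_space.prob_space_stream_space[OF prob_space_measure_pmf])
  have coding_S [measurable]: "coding \<beta>1 \<beta>2 \<in> borel_measurable S"
    unfolding S_def using assms(1-4) by (rule coding_measurable)
  have "emeasure \<mu> A = ennreal p * emeasure (distr \<mu> borel (T1 \<beta>1)) A
      + ennreal (1 - p) * emeasure (distr \<mu> borel (T2 \<beta>2)) A" if A [measurable]: "A \<in> sets borel" for A
  proof -
    have step: "emeasure (distr \<mu> borel (if x then T1 \<beta>1 else T2 \<beta>2)) A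
        = (\<integral>\<^sup>+\<omega>. indicator A (coding \<beta>1 \<beta>2 (x ## \<omega>)) \<partial>S)" for x
      unfolding \<mu>_def using assms(1-4)
      by (subst distr_distr) (simp_all add: emeasure_distr_eq_nn_integral coding_Cons comp_def)
    have "emeasure \<mu> A = (\<integral>\<^sup>+\<omega>. indicator A (coding \<beta>1 \<beta>2 \<omega>) \<partial>S)"
      unfolding \<mu>_def by (simp add: emeasure_distr_eq_nn_integral)
    also have "\<dots> = (\<integral>\<^sup>+x. (\<integral>\<^sup>+\<omega>. indicator A (coding \<beta>1 \<beta>2 (x ## \<omega>)) \<partial>S) \<partial>bernoulli_pmf p)"
      unfolding S_def
      by (rule prob_space.nn_integral_stream_space[OF prob_space_measure_pmf]) (simp add: S_def[symmetric])
    also have "\<dots> = (\<integral>\<^sup>+x. emeasure (distr \<mu> borel (if x then T1 \<beta>1 else T2 \<beta>2)) A \<partial>bernoulli_pmf p)"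
      by (simp only: step)
    also have "\<dots> = ennreal p * emeasure (distr \<mu> borel (T1 \<beta>1)) A
        + ennreal (1 - p) * emeasure (distr \<mu> borel (T2 \<beta>2)) A"
      using assms(5,6) by (simp add: mult.commute)
    finally show ?thesis .
  qed
  moreover have "prob_space \<mu>"
    unfolding \<mu>_def by (intro prob_space.prob_space_distr[OF prob_space_S coding_S])
  ultimately show ?thesis
    by (simp add: is_ssm_def \<mu>_def S_def)
qed

lemma is_ssm_mixture:
  assumes "is_ssm p \<beta>1 \<beta>2 \<mu>" and "0 \<le> p" "p \<le> 1"
  shows "\<mu> = distr (measure_pmf (bernoulli_pmf p) \<Otimes>\<^sub>M \<mu>) borel
                 (\<lambda>(x, y). (if x then T1 \<beta>1 else T2 \<beta>2) y)"
    (is "_ = distr (?M \<Otimes>\<^sub>M \<mu>) borel ?F")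
proof (rule measure_eqI)
  have sets_\<mu> [measurable_cong]: "sets \<mu> = sets borel" and "prob_space \<mu>"
    using assms(1) by (auto simp: is_ssm_def)
  then interpret \<mu>: sigma_finite_measure \<mu>
    by (simp add: prob_space_imp_sigma_finite)
  have F_measurable [measurable]: "?F \<in> borel_measurable (?M \<Otimes>\<^sub>M \<mu>)"
    unfolding T_eq_digit_affine digit_contr_def digit_sign_def by measurable
  show "sets \<mu> = sets (distr (?M \<Otimes>\<^sub>M \<mu>) borel ?F)"
    by (simp add: sets_\<mu>)
  fix A
  assume "A \<in> sets \<mu>"
  then have A [measurable]: "A \<in> sets borel"
    by (simp add: sets_\<mu>)
  have "emeasure (distr (?M \<Otimes>\<^sub>M \<mu>) borel ?F) A = (\<integral>\<^sup>+z. indicator A (?F z) \<partial>(?M \<Otimes>\<^sub>M \<mu>))"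
    by (simp add: emeasure_distr_eq_nn_integral)
  also have "\<dots> = (\<integral>\<^sup>+x. \<integral>\<^sup>+y. indicator A ((if x then T1 \<beta>1 else T2 \<beta>2) y) \<partial>\<mu> \<partial>?M)"
    by (subst \<mu>.nn_integral_fst[symmetric]) simp_all
  also have "\<dots> = (\<integral>\<^sup>+x. emeasure (distr \<mu> borel (if x then T1 \<beta>1 else T2 \<beta>2)) A \<partial>?M)"
    by (simp add: emeasure_distr_eq_nn_integral measurable_cong_sets[OF sets_\<mu> refl])
  also have "\<dots> = emeasure \<mu> A"
    using assms A by (simp add: is_ssm_def mult.commute)
  finally show "emeasure \<mu> A = emeasure (distr (?M \<Otimes>\<^sub>M \<mu>) borel ?F) A"
    by simp
qed

lemma char_is_ssm:
  assumes "is_ssm p \<beta>1 \<beta>2 \<mu>" and "0 \<le> p" "p \<le> 1"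
  shows "char \<mu> \<xi> = p * (iexp (\<xi> * \<beta>1) * char \<mu> (\<xi> * \<beta>1))
                 + (1 - p) * (iexp (- (\<xi> * \<beta>2)) * char \<mu> (\<xi> * \<beta>2))"
proof -
  let ?M = "measure_pmf (bernoulli_pmf p)"
  let ?T = "\<lambda>x. if x then T1 \<beta>1 else T2 \<beta>2"
  have sets_\<mu> [measurable_cong]: "sets \<mu> = sets borel" and "prob_space \<mu>"
    using assms(1) by (auto simp: is_ssm_def)
  interpret P: pair_prob_space ?M \<mu>
    by (simp add: pair_prob_space_def pair_sigma_finite_def prob_space_measure_pmf
        prob_space_imp_sigma_finite \<open>prob_space \<mu>\<close>)
  have F_measurable [measurable]: "(\<lambda>(x, y). ?T x y) \<in> borel_measurable (?M \<Otimes>\<^sub>M \<mu>)"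
    unfolding T_eq_digit_affine digit_contr_def digit_sign_def by measurable
  have "(CLINT y|\<mu>. iexp (\<xi> * T1 \<beta>1 y)) = (CLINT y|\<mu>. iexp (\<xi> * \<beta>1) * iexp (\<xi> * \<beta>1 * y))"
    by (intro Bochner_Integration.integral_cong) (auto simp: T1_def algebra_simps simp flip: exp_add)
  moreover have "(CLINT y|\<mu>. iexp (\<xi> * T2 \<beta>2 y)) = (CLINT y|\<mu>. iexp (- (\<xi> * \<beta>2)) * iexp (\<xi> * \<beta>2 * y))"
    by (intro Bochner_Integration.integral_cong) (auto simp: T2_def algebra_simps simp flip: exp_add)
  ultimately have char_T1: "(CLINT y|\<mu>. iexp (\<xi> * T1 \<beta>1 y)) = iexp (\<xi> * \<beta>1) * char \<mu> (\<xi> * \<beta>1)"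
    and char_T2: "(CLINT y|\<mu>. iexp (\<xi> * T2 \<beta>2 y)) = iexp (- (\<xi> * \<beta>2)) * char \<mu> (\<xi> * \<beta>2)"
    by (simp_all add: char_def)
  have "char \<mu> \<xi> = (CLINT z|(?M \<Otimes>\<^sub>M \<mu>). iexp (\<xi> * (case z of (x, y) \<Rightarrow> ?T x y)))"
    unfolding char_def
    by (subst is_ssm_mixture[OF assms]) (simp add: integral_distr)
  also have "\<dots> = (CLINT x|?M. CLINT y|\<mu>. iexp (\<xi> * ?T x y))"
    by (subst P.integral_fst'[symmetric]) (auto intro: P.integrable_iexp)
  also have "\<dots> = p * (CLINT y|\<mu>. iexp (\<xi> * T1 \<beta>1 y)) + (1 - p) * (CLINT y|\<mu>. iexp (\<xi> * T2 \<beta>2 y))"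
    using assms(2,3) by (subst integral_measure_pmf[of UNIV]) (auto simp: UNIV_bool scaleR_conv_of_real)
  finally show ?thesis
    unfolding char_T1 char_T2 by simp
qed

lemma is_ssm_unique:
  assumes "is_ssm p \<beta>1 \<beta>2 \<mu>1" "is_ssm p \<beta>1 \<beta>2 \<mu>2"
    and "0 \<le> p" "p \<le> 1" "\<bar>\<beta>1\<bar> < 1" "\<bar>\<beta>2\<bar> < 1"
  shows "\<mu>1 = \<mu>2"
proof -
  have rd1: "real_distribution \<mu>1" and rd2: "real_distribution \<mu>2"
    using assms(1,2) by (auto simp: is_ssm_def real_distribution_def real_distribution_axioms_def)
  define D where "D \<xi> = char \<mu>1 \<xi> - char \<mu>2 \<xi>" for \<xi>
  have D_le: "norm (D \<xi>) \<le> p * norm (D (\<xi> * \<beta>1)) + (1 - p) * norm (D (\<xi> * \<beta>2))" for \<xi>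
  proof -
    have "D \<xi> = p * (iexp (\<xi> * \<beta>1) * D (\<xi> * \<beta>1)) + (1 - p) * (iexp (- (\<xi> * \<beta>2)) * D (\<xi> * \<beta>2))"
      by (simp add: D_def char_is_ssm[OF assms(1,3,4), of \<xi>] char_is_ssm[OF assms(2,3,4), of \<xi>]
          algebra_simps)
    also have "norm \<dots> \<le> norm (p * (iexp (\<xi> * \<beta>1) * D (\<xi> * \<beta>1)))
        + norm ((1 - p) * (iexp (- (\<xi> * \<beta>2)) * D (\<xi> * \<beta>2)))"
      by (rule norm_triangle_ineq)
    also have "\<dots> = p * norm (D (\<xi> * \<beta>1)) + (1 - p) * norm (D (\<xi> * \<beta>2))"
    proof -
      have "cmod (1 - complex_of_real p) = 1 - p"
        using assms(4) by (metis abs_of_nonneg diff_ge_0_iff_ge norm_of_real of_real_1 of_real_diff)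
      then show ?thesis
        using assms(3) by (simp add: norm_mult norm_exp_i_times del: of_real_mult)
    qed
    finally show ?thesis .
  qed
  have D_cont: "isCont D 0"
    unfolding D_def using real_distribution.isCont_char[OF rd1] real_distribution.isCont_char[OF rd2]
    by (intro continuous_intros)
  have D_0: "D 0 = 0"
    unfolding D_def by (simp add: real_distribution.char_zero[OF rd1] real_distribution.char_zero[OF rd2])
  have "D \<xi> = 0" for \<xi>
    using eq_0_if_norm_le_mixture_of_dilations[OF D_cont D_0 assms(3-6) D_le] .
  then have "char \<mu>1 = char \<mu>2"
    by (auto simp: D_def fun_eq_iff)
  then show ?thesis
    by (rule Levy_uniqueness[OF rd1 rd2])
qed

lemma ssm_eq_coding_distr:
  assumes "0 < \<beta>1" "\<beta>1 < 1" "0 < \<beta>2" "\<beta>2 < 1" and "0 \<le> p" "p \<le> 1"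
  shows "ssm p \<beta>1 \<beta>2 = distr (stream_space (measure_pmf (bernoulli_pmf p))) borel (coding \<beta>1 \<beta>2)"
proof -
  have "ssm p \<beta>1 \<beta>2 = (THE \<mu>. is_ssm p \<beta>1 \<beta>2 \<mu>)"
    by (simp add: ssm_def is_ssm_def)
  also have "\<dots> = distr (stream_space (measure_pmf (bernoulli_pmf p))) borel (coding \<beta>1 \<beta>2)"
  proof (rule the_equality[of "is_ssm p \<beta>1 \<beta>2", OF is_ssm_coding_distr[OF assms]])
    fix \<mu>
    assume "is_ssm p \<beta>1 \<beta>2 \<mu>"
    from is_ssm_unique[OF this is_ssm_coding_distr[OF assms]] assms
    show "\<mu> = distr (stream_space (measure_pmf (bernoulli_pmf p))) borel (coding \<beta>1 \<beta>2)"
      by simp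
  qed
  finally show ?thesis .
qed

lemma is_ssm_measure_eq:
  assumes "is_ssm p \<beta>1 \<beta>2 \<mu>" and "0 \<le> p" "p \<le> 1" and "A \<in> sets borel"
  shows "measure \<mu> A = p * measure \<mu> (T1 \<beta>1 -` A) + (1 - p) * measure \<mu> (T2 \<beta>2 -` A)"
proof -
  have sets_\<mu>: "sets \<mu> = sets borel" and prob_space_\<mu>: "prob_space \<mu>"
    using assms(1) by (auto simp: is_ssm_def)
  interpret prob_space \<mu>
    by (rule prob_space_\<mu>)
  have [simp]: "space \<mu> = UNIV"
    using sets_eq_imp_space_eq[OF sets_\<mu>] by simp
  have [measurable]: "T1 \<beta>1 \<in> measurable \<mu> borel" "T2 \<beta>2 \<in> measurable \<mu> borel"
    by (simp_all add: measurable_cong_sets[OF sets_\<mu> refl])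
  have "ennreal (measure \<mu> A) = ennreal p * ennreal (measure \<mu> (T1 \<beta>1 -` A))
      + ennreal (1 - p) * ennreal (measure \<mu> (T2 \<beta>2 -` A))"
    using assms(1,4) sets_\<mu> by (simp add: is_ssm_def emeasure_distr emeasure_eq_measure)
  also have "\<dots> = ennreal (p * measure \<mu> (T1 \<beta>1 -` A) + (1 - p) * measure \<mu> (T2 \<beta>2 -` A))"
    using assms(2,3) by (simp add: ennreal_mult ennreal_plus)
  finally show ?thesis
    using assms(2,3) by (subst (asm) ennreal_inj) auto
qed

definition sign_prob :: "real \<Rightarrow> int \<Rightarrow> real" where
  "sign_prob p a = (if a = 1 then p else 1 - p)"

definition sign_contr :: "real \<Rightarrow> real \<Rightarrow> int \<Rightarrow> real" where
  "sign_contr \<beta>1 \<beta>2 a = (if a = 1 then \<beta>1 else \<beta>2)"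

text \<open>\<open>T1\<close> and \<open>T2\<close> are \<open>x \<mapsto> sign_contr \<beta>1 \<beta>2 a * (x + a)\<close> for \<open>a = 1\<close> and \<open>a = -1\<close>.\<close>

definition sign_shift :: "real \<Rightarrow> real \<Rightarrow> int \<Rightarrow> real" where
  "sign_shift \<beta>1 \<beta>2 a = sign_contr \<beta>1 \<beta>2 a * of_int a"

lemma self_similar_measure_ssm:
  assumes "0 < \<beta>1" "\<beta>1 < 1" "0 < \<beta>2" "\<beta>2 < 1" and "0 < p" "p < 1"
  shows "self_similar_measure {1, -1} (sign_prob p) (sign_contr \<beta>1 \<beta>2) (sign_shift \<beta>1 \<beta>2)
           (ssm p \<beta>1 \<beta>2) (max \<beta>1 \<beta>2 / (1 - max \<beta>1 \<beta>2))"
proof -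
  define S where "S = stream_space (measure_pmf (bernoulli_pmf p))"
  define R where "R = max \<beta>1 \<beta>2 / (1 - max \<beta>1 \<beta>2)"
  have ssm_eq: "ssm p \<beta>1 \<beta>2 = distr S borel (coding \<beta>1 \<beta>2)"
    unfolding S_def using assms by (intro ssm_eq_coding_distr) auto
  have ssm: "is_ssm p \<beta>1 \<beta>2 (ssm p \<beta>1 \<beta>2)"
    unfolding ssm_eq S_def using assms by (intro is_ssm_coding_distr) auto
  have "prob_space S"
    unfolding S_def by (rule prob_space.prob_space_stream_space[OF prob_space_measure_pmf])
  moreover have "coding \<beta>1 \<beta>2 -` {-R..R} \<inter> space S = space S"
    using abs_coding_le[OF assms(1-4)] by (auto simp: R_def abs_le_iff minus_le_iff)
  ultimately have support: "measure (ssm p \<beta>1 \<beta>2) {-R..R} = 1"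
    unfolding ssm_eq S_def using coding_measurable[OF assms(1-4)]
    by (simp add: measure_distr prob_space.prob_space)
  show ?thesis
    unfolding R_def[symmetric]
  proof (rule self_similar_measure.intro)
    show "measure (ssm p \<beta>1 \<beta>2) A = (\<Sum>a\<in>{1, -1}. sign_prob p a *
        measure (ssm p \<beta>1 \<beta>2) ((\<lambda>x. sign_contr \<beta>1 \<beta>2 a * x + sign_shift \<beta>1 \<beta>2 a) -` A))"
      if "A \<in> sets borel" for A
      using is_ssm_measure_eq[OF ssm _ _ that] assms(5,6)
      by (simp add: sign_prob_def sign_contr_def sign_shift_def T1_def[abs_def] T2_def[abs_def])
  qed (use ssm support assms in \<open>simp_all add: is_ssm_def sign_prob_def sign_contr_def\<close>)
qed

lemma sign_seqs_eq_words: "sign_seqs n = words {1, -1} n"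
  by (auto simp: sign_seqs_def words_def)

lemma nplus_0 [simp]: "nplus 0 r = 0"
  by (simp add: nplus_def)

lemma nminus_0 [simp]: "nminus 0 r = 0"
  by (simp add: nminus_def)

lemma nplus_Cons: "nplus (Suc k) (a # r) = (if a = 1 then 1 else 0) + nplus k r"
  by (simp add: nplus_def)

lemma nplus_le: "nplus k r \<le> k"
  unfolding nplus_def by (metis length_filter_le length_take min.bounded_iff order.trans order_refl)

lemma nminus_Cons: "nminus (Suc k) (a # r) = (if a = 1 then 0 else 1) + nminus k r"
  using nplus_le[of k r] by (simp add: nminus_def nplus_Cons)

lemma prod_list_sign_prob: "prod_list (map (sign_prob p) r) = wt (length r) p r"
  by (induction r) (auto simp: wt_def sign_prob_def nplus_Cons nminus_Cons)

lemma prod_list_sign_contr: "prod_list (map (sign_contr \<beta>1 \<beta>2) r) = rho (length r) \<beta>1 \<beta>2 r"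
  by (induction r) (auto simp: rho_def sign_contr_def nplus_Cons nminus_Cons)

lemma prod_list_sign_contr_take:
  "k \<le> length r \<Longrightarrow> prod_list (map (sign_contr \<beta>1 \<beta>2) (take k r)) = \<beta>1 ^ nplus k r * \<beta>2 ^ nminus k r"
  by (simp add: prod_list_sign_contr rho_def nplus_def nminus_def min_absorb1)

lemma affine_comp_sign_seq:
  assumes "r \<in> sign_seqs n"
  shows "affine_comp (sign_contr \<beta>1 \<beta>2) (sign_shift \<beta>1 \<beta>2) r 0
           = (\<Sum>k = 1..n. real_of_int (r ! (k - 1)) * \<beta>1 ^ nplus k r * \<beta>2 ^ nminus k r)"
proof -
  have n: "length r = n"
    using assms by (simp add: sign_seqs_def)
  have "prod_list (map (sign_contr \<beta>1 \<beta>2) (take k r)) * sign_shift \<beta>1 \<beta>2 (r ! k)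
      = real_of_int (r ! k) * \<beta>1 ^ nplus (Suc k) r * \<beta>2 ^ nminus (Suc k) r" if "k < n" for k
  proof -
    have "prod_list (map (sign_contr \<beta>1 \<beta>2) (take (Suc k) r))
        = prod_list (map (sign_contr \<beta>1 \<beta>2) (take k r)) * sign_contr \<beta>1 \<beta>2 (r ! k)"
      using that n by (simp add: take_Suc_conv_app_nth)
    then show ?thesis
      using that n prod_list_sign_contr_take[of "Suc k" r] by (simp add: sign_shift_def)
  qed
  then show ?thesis
    by (simp add: affine_comp_0_eq_sum n sum.atLeast1_atMost_eq)
qed

lemma SD_eq_entropy_div_lyapunov:
  "SD p \<beta>1 \<beta>2 = ifs_entropy {1, -1} (sign_prob p) / ifs_lyapunov {1, -1} (sign_prob p) (sign_contr \<beta>1 \<beta>2)"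
  by (simp add: SD_def ifs_entropy_def ifs_lyapunov_def sign_prob_def sign_contr_def)

lemma ifs_entropy_sign_seqs:
  assumes "0 < p" "p < 1"
  shows "ifs_entropy (sign_seqs n) (wt n p) = n * ifs_entropy {1, -1} (sign_prob p)"
proof -
  have "ifs_entropy (sign_seqs n) (wt n p) = ifs_entropy (words {1, -1} n) (\<lambda>w. prod_list (map (sign_prob p) w))"
    unfolding ifs_entropy_def sign_seqs_eq_words
    by (intro arg_cong[where f = uminus] sum.cong) (auto simp: words_def prod_list_sign_prob)
  also have "\<dots> = n * ifs_entropy {1, -1} (sign_prob p)"
    using assms by (intro ifs_entropy_words) (auto simp: sign_prob_def)
  finally show ?thesis .
qed

lemma ifs_lyapunov_sign_seqs:
  assumes "0 < \<beta>1" "0 < \<beta>2"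
  shows "ifs_lyapunov (sign_seqs n) (wt n p) (rho n \<beta>1 \<beta>2)
           = n * ifs_lyapunov {1, -1} (sign_prob p) (sign_contr \<beta>1 \<beta>2)"
proof -
  have "ifs_lyapunov (sign_seqs n) (wt n p) (rho n \<beta>1 \<beta>2)
      = ifs_lyapunov (words {1, -1} n) (\<lambda>w. prod_list (map (sign_prob p) w))
          (\<lambda>w. prod_list (map (sign_contr \<beta>1 \<beta>2) w))"
    unfolding ifs_lyapunov_def sign_seqs_eq_words
    by (intro arg_cong[where f = uminus] sum.cong) (auto simp: words_def prod_list_sign_prob prod_list_sign_contr)
  also have "\<dots> = n * ifs_lyapunov {1, -1} (sign_prob p) (sign_contr \<beta>1 \<beta>2)"
    using assms by (intro ifs_lyapunov_words) (auto simp: sign_prob_def sign_contr_def)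
  finally show ?thesis .
qed

lemma rho_eq_if_nplus_eq: "nplus n s = nplus n t \<Longrightarrow> rho n \<beta>1 \<beta>2 s = rho n \<beta>1 \<beta>2 t"
  by (simp add: rho_def nminus_def)

lemma wt_pos: "0 < p \<Longrightarrow> p < 1 \<Longrightarrow> 0 < wt n p r"
  by (simp add: wt_def)

lemma sum_merged_sign_seqs:
  assumes "s \<in> sign_seqs n" "t \<in> sign_seqs n" "s \<noteq> t"
  shows "(\<Sum>r\<in>sign_seqs n - {t}. f (((wt n p)(s := wt n p s + wt n p t)) r) r)
           = f (wt n p s + wt n p t) s + (\<Sum>r\<in>sign_seqs n - {s, t}. f (wt n p r) r)"
proof -
  have "finite (sign_seqs n - {t})"
    by (simp add: sign_seqs_eq_words finite_words)
  moreover have "sign_seqs n - {t} - {s} = sign_seqs n - {s, t}"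
    by auto
  ultimately show ?thesis
    using assms by (simp add: sum.remove[of _ s])
qed

lemma SDhat_numerator_eq:
  assumes "s \<in> sign_seqs n" "t \<in> sign_seqs n" "s \<noteq> t"
  shows "- (\<Sum>r\<in>sign_seqs n - {s, t}. wt n p r * ln (wt n p r)) - (wt n p s + wt n p t) * ln (wt n p s + wt n p t)
           = ifs_entropy (sign_seqs n - {t}) ((wt n p)(s := wt n p s + wt n p t))"
  using sum_merged_sign_seqs[OF assms, where f = "\<lambda>x r. x * ln x"] by (simp add: ifs_entropy_def)

lemma SDhat_denominator_eq:
  assumes "s \<in> sign_seqs n" "t \<in> sign_seqs n" "s \<noteq> t"
  shows "- (\<Sum>r\<in>sign_seqs n - {s, t}. wt n p r * ln (rho n \<beta>1 \<beta>2 r)) - (wt n p s + wt n p t) * ln (rho n \<beta>1 \<beta>2 s)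
           = ifs_lyapunov (sign_seqs n - {t}) ((wt n p)(s := wt n p s + wt n p t)) (rho n \<beta>1 \<beta>2)"
  using sum_merged_sign_seqs[OF assms, where f = "\<lambda>x r. x * ln (rho n \<beta>1 \<beta>2 r)"]
  by (simp add: ifs_lyapunov_def)

lemma SDhat_eq_merged_entropy_div_lyapunov:
  assumes "s \<in> sign_seqs n" "t \<in> sign_seqs n" "s \<noteq> t"
  shows "SDhat n s t p \<beta>1 \<beta>2
           = ifs_entropy (sign_seqs n - {t}) ((wt n p)(s := wt n p s + wt n p t))
             / ifs_lyapunov (sign_seqs n - {t}) ((wt n p)(s := wt n p s + wt n p t)) (rho n \<beta>1 \<beta>2)"
  unfolding SDhat_def SDhat_numerator_eq[OF assms] SDhat_denominator_eq[OF assms] ..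

lemma ifs_lyapunov_merged_sign_seqs:
  assumes "s \<in> sign_seqs n" "t \<in> sign_seqs n" "s \<noteq> t" "nplus n s = nplus n t" "0 < \<beta>1" "0 < \<beta>2"
  shows "ifs_lyapunov (sign_seqs n - {t}) ((wt n p)(s := wt n p s + wt n p t)) (rho n \<beta>1 \<beta>2)
           = n * ifs_lyapunov {1, -1} (sign_prob p) (sign_contr \<beta>1 \<beta>2)"
proof -
  have "ifs_lyapunov (sign_seqs n - {t}) ((wt n p)(s := wt n p s + wt n p t)) (rho n \<beta>1 \<beta>2)
      = ifs_lyapunov (sign_seqs n) (wt n p) (rho n \<beta>1 \<beta>2)"
    using assms(1-3) rho_eq_if_nplus_eq[OF assms(4)]
    by (intro ifs_lyapunov_merge) (simp_all add: sign_seqs_eq_words finite_words)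
  also have "\<dots> = n * ifs_lyapunov {1, -1} (sign_prob p) (sign_contr \<beta>1 \<beta>2)"
    using assms(5,6) by (rule ifs_lyapunov_sign_seqs)
  finally show ?thesis .
qed

lemma sign_lyapunov_pos:
  assumes "0 < \<beta>1" "\<beta>1 < 1" "0 < \<beta>2" "\<beta>2 < 1" and "0 < p" "p < 1"
  shows "0 < ifs_lyapunov {1, -1} (sign_prob p) (sign_contr \<beta>1 \<beta>2)"
  using assms by (intro ifs_lyapunov_pos) (auto simp: sign_prob_def sign_contr_def)

lemma SDhat_less_SD:
  assumes "0 < n" and "s \<in> sign_seqs n" "t \<in> sign_seqs n" "s \<noteq> t" "nplus n s = nplus n t"
    and "0 < \<beta>1" "\<beta>1 < 1" "0 < \<beta>2" "\<beta>2 < 1" and "0 < p" "p < 1"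
  shows "SDhat n s t p \<beta>1 \<beta>2 < SD p \<beta>1 \<beta>2"
proof -
  let ?H = "ifs_entropy {1, -1} (sign_prob p)"
  let ?\<chi> = "ifs_lyapunov {1, -1} (sign_prob p) (sign_contr \<beta>1 \<beta>2)"
  have "ifs_entropy (sign_seqs n - {t}) ((wt n p)(s := wt n p s + wt n p t)) < ifs_entropy (sign_seqs n) (wt n p)"
    using wt_pos[OF assms(10,11)] assms(2-4) by (intro ifs_entropy_merge_less) (simp_all add: sign_seqs_eq_words finite_words)
  also have "\<dots> = n * ?H"
    using assms(10,11) by (rule ifs_entropy_sign_seqs)
  finally have "SDhat n s t p \<beta>1 \<beta>2 < (n * ?H) / (n * ?\<chi>)"
    unfolding SDhat_eq_merged_entropy_div_lyapunov[OF assms(2-4)] ifs_lyapunov_merged_sign_seqs[OF assms(2-6,8)]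
    using assms(1) sign_lyapunov_pos[OF assms(6-11)] by (intro divide_strict_right_mono) auto
  also have "\<dots> = SD p \<beta>1 \<beta>2"
    using assms(1) by (simp add: SD_eq_entropy_div_lyapunov)
  finally show ?thesis .
qed

lemma continuous_on_SDhat:
  assumes "0 < n" and "s \<in> sign_seqs n" "t \<in> sign_seqs n" "s \<noteq> t" "nplus n s = nplus n t"
    and "0 < \<beta>1" "\<beta>1 < 1" "0 < \<beta>2" "\<beta>2 < 1"
  shows "continuous_on {0<..<1} (\<lambda>p. SDhat n s t p \<beta>1 \<beta>2)"
  unfolding SDhat_def
proof (intro continuous_on_divide ballI)
  have wt_cont: "continuous_on {0<..<1} (\<lambda>p. wt n p r)" for r
    unfolding wt_def by (intro continuous_intros)
  have wt_ln_cont: "continuous_on {0<..<1} (\<lambda>p. wt n p r * ln (wt n p r))" for r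
    using wt_pos by (intro continuous_intros wt_cont) (auto simp: less_imp_neq[symmetric])
  have merged_cont: "continuous_on {0<..<1} (\<lambda>p. (wt n p s + wt n p t) * ln (wt n p s + wt n p t))"
    using wt_pos by (intro continuous_intros wt_cont) (smt (verit) greaterThanLessThan_iff)
  show "continuous_on {0<..<1} (\<lambda>p. - (\<Sum>r\<in>sign_seqs n - {s, t}. wt n p r * ln (wt n p r))
      - (wt n p s + wt n p t) * ln (wt n p s + wt n p t))"
    by (intro continuous_on_diff continuous_on_minus continuous_on_sum wt_ln_cont merged_cont)
  show "continuous_on {0<..<1} (\<lambda>p. - (\<Sum>r\<in>sign_seqs n - {s, t}. wt n p r * ln (rho n \<beta>1 \<beta>2 r))
      - (wt n p s + wt n p t) * ln (rho n \<beta>1 \<beta>2 s))"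
    by (intro continuous_intros wt_cont)
  fix p :: real
  assume "p \<in> {0<..<1}"
  then have "0 < n * ifs_lyapunov {1, -1} (sign_prob p) (sign_contr \<beta>1 \<beta>2)"
    using assms(1) sign_lyapunov_pos[OF assms(6-9)] by simp
  then show "- (\<Sum>r\<in>sign_seqs n - {s, t}. wt n p r * ln (rho n \<beta>1 \<beta>2 r))
      - (wt n p s + wt n p t) * ln (rho n \<beta>1 \<beta>2 s) \<noteq> 0"
    unfolding SDhat_denominator_eq[OF assms(2-4)] ifs_lyapunov_merged_sign_seqs[OF assms(2-6,8)] by linarith
qed

lemma hausdorff_dim_ssm_le_SDhat:
  assumes "0 < n" and "s \<in> sign_seqs n" "t \<in> sign_seqs n" "s \<noteq> t" "nplus n s = nplus n t"
    and "0 < \<beta>1" "\<beta>1 < 1" "0 < \<beta>2" "\<beta>2 < 1"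
    and "(\<Sum>k = 1..n. real_of_int (s ! (k - 1)) * \<beta>1 ^ nplus k s * \<beta>2 ^ nminus k s
                     - real_of_int (t ! (k - 1)) * \<beta>1 ^ nplus k t * \<beta>2 ^ nminus k t) = 0"
    and "0 < p" "p < 1"
  shows "hausdorff_dim_measure (ssm p \<beta>1 \<beta>2) \<le> SDhat n s t p \<beta>1 \<beta>2"
proof -
  define R where "R = max \<beta>1 \<beta>2 / (1 - max \<beta>1 \<beta>2)"
  define b where "b r = affine_comp (sign_contr \<beta>1 \<beta>2) (sign_shift \<beta>1 \<beta>2) r 0" for r
  interpret two_maps: self_similar_measure "{1, -1}" "sign_prob p" "sign_contr \<beta>1 \<beta>2" "sign_shift \<beta>1 \<beta>2"
      "ssm p \<beta>1 \<beta>2" R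
    unfolding R_def using assms(6-9,11,12) by (rule self_similar_measure_ssm)
  interpret n_fold: self_similar_measure "words {1, -1} n" "\<lambda>w. prod_list (map (sign_prob p) w)"
      "\<lambda>w. prod_list (map (sign_contr \<beta>1 \<beta>2) w)" b "ssm p \<beta>1 \<beta>2" R
    unfolding b_def using assms(1) by (rule two_maps.iterated_system)
  interpret sign_seqs: self_similar_measure "sign_seqs n" "wt n p" "rho n \<beta>1 \<beta>2" b "ssm p \<beta>1 \<beta>2" R
    unfolding sign_seqs_eq_words
    by (rule n_fold.cong) (auto simp: words_def prod_list_sign_prob prod_list_sign_contr)
  have "b s = b t"
    using assms(2,3,10) by (simp add: b_def affine_comp_sign_seq sum_subtractf)
  interpret merged: self_similar_measure "sign_seqs n - {t}" "(wt n p)(s := wt n p s + wt n p t)"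
      "rho n \<beta>1 \<beta>2" b "ssm p \<beta>1 \<beta>2" R
    using assms(2-4) rho_eq_if_nplus_eq[OF assms(5)] \<open>b s = b t\<close> by (rule sign_seqs.merge_equal_maps)
  show ?thesis
    unfolding SDhat_eq_merged_entropy_div_lyapunov[OF assms(2-4)]
    by (rule merged.hausdorff_dim_measure_le_entropy_div_lyapunov)
qed

theorem proposition2p1:
  fixes n :: nat and s t :: "int list" and \<beta>1 \<beta>2 :: real
  assumes "n \<ge> 3"
    and "s \<in> sign_seqs n" and "t \<in> sign_seqs n" and "s \<noteq> t"
    and "nplus n s = nplus n t"
    and "0 < \<beta>1" and "\<beta>1 < 1" and "0 < \<beta>2" and "\<beta>2 < 1"
    and "(\<Sum>k = 1..n. real_of_int (s ! (k - 1)) * \<beta>1 ^ nplus k s * \<beta>2 ^ nminus k s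
                     - real_of_int (t ! (k - 1)) * \<beta>1 ^ nplus k t * \<beta>2 ^ nminus k t) = 0"
  shows "(\<forall>p \<in> {0<..<1}.
            hausdorff_dim_measure (ssm p \<beta>1 \<beta>2) \<le> SDhat n s t p \<beta>1 \<beta>2
          \<and> SDhat n s t p \<beta>1 \<beta>2 < SD p \<beta>1 \<beta>2)
       \<and> continuous_on {0<..<1} (\<lambda>p. SDhat n s t p \<beta>1 \<beta>2)"
proof -
  have "0 < n"
    using assms(1) by simp
  show ?thesis
  proof (intro conjI ballI)
    fix p :: real
    assume "p \<in> {0<..<1}"
    then have "0 < p" "p < 1"
      by auto
    show "hausdorff_dim_measure (ssm p \<beta>1 \<beta>2) \<le> SDhat n s t p \<beta>1 \<beta>2"
      using \<open>0 < n\<close> assms(2-10) \<open>0 < p\<close> \<open>p < 1\<close> by (rule hausdorff_dim_ssm_le_SDhat)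
    show "SDhat n s t p \<beta>1 \<beta>2 < SD p \<beta>1 \<beta>2"
      using \<open>0 < n\<close> assms(2-9) \<open>0 < p\<close> \<open>p < 1\<close> by (rule SDhat_less_SD)
  next
    show "continuous_on {0<..<1} (\<lambda>p. SDhat n s t p \<beta>1 \<beta>2)"
      using \<open>0 < n\<close> assms(2-9) by (rule continuous_on_SDhat)
  qed
qed

end
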